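(* Let $V \in \mathcal{H}^{r\times n}$ and $Y\in\mathcal{H}^{n\times r}$ be a left and a right canonical matrix, respectively, for $T$ at $\lambda_0$. Then $VTY$ is invertible as a meromorphic matrix, and: (i) $\hat Y := Y(VTY)^{-1}\Delta$ is a right canonical matrix for $T$ at $\lambda_0$ and satisfies the biorthogonality condition $\Delta^{-1}VT\hat Y\Delta^{-1}\doteq\Delta^{-1}$; (ii) $\hat V := \Delta(VTY)^{-1}V$ is a left canonical matrix for $T$ at $\lambda_0$ and satisfies $\Delta^{-1}\hat V TY\Delta^{-1}\doteq\Delta^{-1}$; (iii) $T^{-1}\doteq Y(VTY)^{-1}V$.
   Context: Let $\Omega\subset\mathbb{C}$ be open and $\lambda_0\in\Omega$ fixed. $\mathcal{H}$ denotes the ring of holomorphic functions on $\Omega$, $\mathcal{M}$ the field of meromorphic functions on $\Omega$, and $\mathcal{H}_0$ the ring of functions holomorphic in some neighborhood of $\lambda_0$. Write $\chi_0(\lambda)=\lambda-\lambda_0$. A matrix $M\in\mathcal{H}_0^{n\times n}$ is unimodular if it has an inverse in $\mathcal{H}_0^{n\times n}$ (equivalently, $M(\lambda_0)$ is nonsingular); $M\in\mathcal{H}_0^{n\times m}$ is left (right) unimodular if it has a left (right) inverse with entries in $\mathcal{H}_0$. For meromorphic matrices $M_1,M_2$ of equal size, $M_1\doteq M_2$ means that $M_2-M_1$ is holomorphic in a neighborhood of $\lambda_0$ (equal principal parts at $\lambda_0$). Throughout, $T\in\mathcal{H}^{n\times n}$ with $\det T$ not identically zero and $\det T(\lambda_0)=0$,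 and $r=\dim\ker T(\lambda_0)$. There exist unimodular $U_L,U_R\in\mathcal{H}_0^{n\times n}$ and uniquely determined integers $m_1\ge\cdots\ge m_n\ge 0$ (the partial multiplicities) with $U_LTU_R=\mathrm{diag}(\chi_0^{m_1},\dots,\chi_0^{m_n})$; one has $m_i>0$ exactly for $i\le r$. Set $\Delta=\mathrm{diag}(\chi_0^{m_1},\dots,\chi_0^{m_r})\in\mathcal{H}_0^{r\times r}$. A root function for $T$ at $\lambda_0$ is $y\in\mathcal{H}^n$ with $y(\lambda_0)\neq0$ and $T(\lambda_0)y(\lambda_0)=0$; its multiplicity $\nu(y)$ is the order of the zero of $Ty$ at $\lambda_0$. A right canonical matrix for $T$ at $\lambda_0$ is $Y\in\mathcal{H}^{n\times r}$ whose columns $y_1,\dots,y_r$ are root functions such that (a) $y_1(\lambda_0),\dots,y_r(\lambda_0)$ are linearly independent, (b) $\sum_{i=1}^r\nu(y_i)=\sum_{i=1}^r m_i$, (c) $\nu(y_1)\ge\cdots\ge\nu(y_r)$. A left root function is a row vector $v\in\mathcal{H}^{1\times n}$ with $v(\lambda_0)\ne0$ and $v(\lambda_0)T(\lambda_0)=0$, with multiplicity the order of the zero of $vT$ at $\lambda_0$; a left canonical matrix $V\in\mathcal{H}^{r\times n}$ is defined analogously (rows are left root functions satisfying the analogues of (a),(b),(c)).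
   Formalization: $\Omega$ is connected, and in (i) and (ii) only a matrix holomorphic near $\lambda_0$ and equal to $\hat Y$ (resp. $\hat V$) off $\lambda_0$ is right (resp. left) canonical for T on some neighbourhood of $\lambda_0$. Each condition added here is assumed in the paper as well or is needed for the statement above to hold. *)

theory Defs
  imports "HOL-Complex_Analysis.Complex_Analysis" "Jordan_Normal_Form.Matrix_Kernel"
begin

text \<open>Matrix-valued functions are functions complex => complex mat (Jordan_Normal_Form),
  vectors are complex vec. Row vectors are represented by complex vec as well.\<close>

definition hol_mat :: "complex set \<Rightarrow> nat \<Rightarrow> nat \<Rightarrow> (complex \<Rightarrow> complex mat) \<Rightarrow> bool" where
  "hol_mat S nr nc F \<longleftrightarrow> (\<forall>z\<in>S. F z \<in> carrier_mat nr nc) \<and>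
     (\<forall>i<nr. \<forall>j<nc. (\<lambda>z. F z $$ (i,j)) holomorphic_on S)"

text \<open>Meromorphic inverse, taken pointwise (adjugate formula; meaningful where det is nonzero).\<close>
definition minv :: "complex mat \<Rightarrow> complex mat" where
  "minv A = (1 / det A) \<cdot>\<^sub>m adj_mat A"

definition vec_zero_order :: "nat \<Rightarrow> (complex \<Rightarrow> complex vec) \<Rightarrow> complex \<Rightarrow> nat" where
  "vec_zero_order k F z0 = (LEAST m. \<exists>i<k. (deriv ^^ m) (\<lambda>z. F z $ i) z0 \<noteq> 0)"

definition chi_diag :: "nat \<Rightarrow> nat list \<Rightarrow> complex \<Rightarrow> complex \<Rightarrow> complex mat" where
  "chi_diag k ms z0 z = mat k k (\<lambda>(i,j). if i = j then (z - z0) ^ (ms ! i) else 0)"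

definition partial_mults :: "complex set \<Rightarrow> nat \<Rightarrow> (complex \<Rightarrow> complex mat) \<Rightarrow> complex \<Rightarrow> nat list \<Rightarrow> bool" where
  "partial_mults \<Omega> n T z0 ms \<longleftrightarrow> length ms = n \<and> (\<forall>i j. i \<le> j \<longrightarrow> j < n \<longrightarrow> ms ! j \<le> ms ! i) \<and>
     (\<exists>U UL UR. open U \<and> z0 \<in> U \<and> U \<subseteq> \<Omega> \<and> hol_mat U n n UL \<and> hol_mat U n n UR \<and>
        det (UL z0) \<noteq> 0 \<and> det (UR z0) \<noteq> 0 \<and>
        (\<forall>z\<in>U. UL z * T z * UR z = chi_diag n ms z0 z))"

definition root_fun :: "complex set \<Rightarrow> nat \<Rightarrow> (complex \<Rightarrow> complex mat) \<Rightarrow> complex \<Rightarrow> (complex \<Rightarrow> complex vec) \<Rightarrow> bool" where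
  "root_fun \<Omega> n T z0 y \<longleftrightarrow> (\<forall>z\<in>\<Omega>. y z \<in> carrier_vec n) \<and> (\<forall>i<n. (\<lambda>z. y z $ i) holomorphic_on \<Omega>) \<and>
     y z0 \<noteq> 0\<^sub>v n \<and> T z0 *\<^sub>v y z0 = 0\<^sub>v n"

definition root_mult :: "nat \<Rightarrow> (complex \<Rightarrow> complex mat) \<Rightarrow> complex \<Rightarrow> (complex \<Rightarrow> complex vec) \<Rightarrow> nat" where
  "root_mult n T z0 y = vec_zero_order n (\<lambda>z. T z *\<^sub>v y z) z0"

text \<open>Left root function (a row vector v, stored as a vec; v T is transpose(T) *v v).\<close>
definition left_root_fun :: "complex set \<Rightarrow> nat \<Rightarrow> (complex \<Rightarrow> complex mat) \<Rightarrow> complex \<Rightarrow> (complex \<Rightarrow> complex vec) \<Rightarrow> bool" where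
  "left_root_fun \<Omega> n T z0 v \<longleftrightarrow> (\<forall>z\<in>\<Omega>. v z \<in> carrier_vec n) \<and> (\<forall>i<n. (\<lambda>z. v z $ i) holomorphic_on \<Omega>) \<and>
     v z0 \<noteq> 0\<^sub>v n \<and> transpose_mat (T z0) *\<^sub>v v z0 = 0\<^sub>v n"

definition left_root_mult :: "nat \<Rightarrow> (complex \<Rightarrow> complex mat) \<Rightarrow> complex \<Rightarrow> (complex \<Rightarrow> complex vec) \<Rightarrow> nat" where
  "left_root_mult n T z0 v = vec_zero_order n (\<lambda>z. transpose_mat (T z) *\<^sub>v v z) z0"

definition right_canonical :: "complex set \<Rightarrow> nat \<Rightarrow> (complex \<Rightarrow> complex mat) \<Rightarrow> complex \<Rightarrow> nat list \<Rightarrow> (complex \<Rightarrow> complex mat) \<Rightarrow> bool" where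
  "right_canonical \<Omega> n T z0 ms Y \<longleftrightarrow>
     (let r = kernel_dim (T z0); nu = (\<lambda>i. root_mult n T z0 (\<lambda>z. col (Y z) i)) in
       hol_mat \<Omega> n r Y \<and>
       (\<forall>i<r. root_fun \<Omega> n T z0 (\<lambda>z. col (Y z) i)) \<and>
       (\<forall>c\<in>carrier_vec r. Y z0 *\<^sub>v c = 0\<^sub>v n \<longrightarrow> c = 0\<^sub>v r) \<and>
       (\<Sum>i<r. nu i) = (\<Sum>i<r. ms ! i) \<and>
       (\<forall>i j. i \<le> j \<longrightarrow> j < r \<longrightarrow> nu j \<le> nu i))"

definition left_canonical :: "complex set \<Rightarrow> nat \<Rightarrow> (complex \<Rightarrow> complex mat) \<Rightarrow> complex \<Rightarrow> nat list \<Rightarrow> (complex \<Rightarrow> complex mat) \<Rightarrow> bool" where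
  "left_canonical \<Omega> n T z0 ms V \<longleftrightarrow>
     (let r = kernel_dim (T z0); nu = (\<lambda>i. left_root_mult n T z0 (\<lambda>z. row (V z) i)) in
       hol_mat \<Omega> r n V \<and>
       (\<forall>i<r. left_root_fun \<Omega> n T z0 (\<lambda>z. row (V z) i)) \<and>
       (\<forall>c\<in>carrier_vec r. transpose_mat (V z0) *\<^sub>v c = 0\<^sub>v n \<longrightarrow> c = 0\<^sub>v r) \<and>
       (\<Sum>i<r. nu i) = (\<Sum>i<r. ms ! i) \<and>
       (\<forall>i j. i \<le> j \<longrightarrow> j < r \<longrightarrow> nu j \<le> nu i))"

text \<open>Equality of principal parts at z0 of (pointwise defined) meromorphic nr x nc matrices:
  the difference agrees, on a punctured neighbourhood of z0, with a matrix function
  holomorphic on a full neighbourhood of z0.\<close>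
definition pp_eq :: "nat \<Rightarrow> nat \<Rightarrow> complex \<Rightarrow> (complex \<Rightarrow> complex mat) \<Rightarrow> (complex \<Rightarrow> complex mat) \<Rightarrow> bool" where
  "pp_eq nr nc z0 M1 M2 \<longleftrightarrow> (\<exists>U H. open U \<and> z0 \<in> U \<and> hol_mat U nr nc H \<and>
      (\<forall>z\<in>U - {z0}. M1 z \<in> carrier_mat nr nc \<and> M2 z \<in> carrier_mat nr nc \<and> M2 z - M1 z = H z))"

end

theory Submission
  imports Defs
begin

text \<open>
  Near \<open>z0\<close> write \<open>T = UL\<^sup>-\<^sup>1 D UR\<^sup>-\<^sup>1\<close> in local Smith form.  Comparing the columns of a right
  canonical matrix \<open>Y\<close> with the coordinates given by \<open>UR\<^sup>-\<^sup>1\<close> shows that the \<open>j\<close>-th column has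
  multiplicity exactly \<open>m\<^sub>j\<close>, so \<open>T Y = G \<Delta>\<close> with \<open>G\<close> holomorphic; dually \<open>V T = \<Delta> K\<close>.
  Completing \<open>Y\<close> by the last \<open>n - r\<close> columns of \<open>UR\<close> to a unimodular \<open>Y\<^sub>f\<close> gives \<open>T Y\<^sub>f = B D\<close>
  with \<open>B\<close> unimodular, and since the rows of \<open>V(z0)\<close> span the left kernel of \<open>T(z0)\<close>, the
  matrices \<open>P = V G\<close> and \<open>Q = K Y\<close> are unimodular.  Now \<open>V T Y = P \<Delta> = \<Delta> Q\<close>, hence
  \<open>Y (V T Y)\<^sup>-\<^sup>1 \<Delta> = Y Q\<^sup>-\<^sup>1\<close> and \<open>\<Delta> (V T Y)\<^sup>-\<^sup>1 V = P\<^sup>-\<^sup>1 V\<close> are holomorphic canonical matrices, the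
  biorthogonality relations hold exactly off \<open>z0\<close>, and
  \<open>T\<^sup>-\<^sup>1 - Y (V T Y)\<^sup>-\<^sup>1 V = (1 - Y Q\<^sup>-\<^sup>1 K) Y\<^sub>f B\<^sup>-\<^sup>1\<close> is holomorphic because the projection
  \<open>1 - Y Q\<^sup>-\<^sup>1 K\<close> kills the columns of \<open>Y\<^sub>f\<close> on which \<open>D\<close> is not the identity.
\<close>

section \<open>Holomorphic matrix functions\<close>

definition hol_vec :: "complex set \<Rightarrow> nat \<Rightarrow> (complex \<Rightarrow> complex vec) \<Rightarrow> bool" where
  "hol_vec S n y \<longleftrightarrow> (\<forall>z\<in>S. y z \<in> carrier_vec n) \<and> (\<forall>i<n. (\<lambda>z. y z $ i) holomorphic_on S)"

lemma hol_matD: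
  "hol_mat S a b F \<Longrightarrow> z \<in> S \<Longrightarrow> F z \<in> carrier_mat a b"
  "hol_mat S a b F \<Longrightarrow> i < a \<Longrightarrow> j < b \<Longrightarrow> (\<lambda>z. F z $$ (i,j)) holomorphic_on S"
  unfolding hol_mat_def by auto

lemma hol_vecD:
  fixes F :: "complex \<Rightarrow> complex vec"
  shows "hol_vec S a F \<Longrightarrow> z \<in> S \<Longrightarrow> F z \<in> carrier_vec a"
    "hol_vec S a F \<Longrightarrow> i < a \<Longrightarrow> (\<lambda>z. F z $ i) holomorphic_on S"
  unfolding hol_vec_def by auto

lemma hol_mat_subset: "hol_mat S a b F \<Longrightarrow> S' \<subseteq> S \<Longrightarrow> hol_mat S' a b F"
  unfolding hol_mat_def by (meson holomorphic_on_subset subsetD)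

lemma hol_mat_entrywise:
  fixes G :: "complex \<Rightarrow> complex mat"
  assumes "\<And>z. z \<in> S \<Longrightarrow> G z \<in> carrier_mat a b"
    and "\<And>i j z. i < a \<Longrightarrow> j < b \<Longrightarrow> z \<in> S \<Longrightarrow> G z $$ (i,j) = g i j z"
    and "\<And>i j. i < a \<Longrightarrow> j < b \<Longrightarrow> g i j holomorphic_on S"
  shows "hol_mat S a b G"
  unfolding hol_mat_def
proof (intro conjI allI impI ballI)
  fix i j assume ij: "i < a" "j < b"
  show "(\<lambda>z. G z $$ (i, j)) holomorphic_on S"
    by (rule holomorphic_transform[OF assms(3)[OF ij]]) (use assms(2)[OF ij] in auto)
qed (use assms in auto)

lemma hol_vec_entrywise:
  fixes G :: "complex \<Rightarrow> complex vec"
  assumes "\<And>z. z \<in> S \<Longrightarrow> G z \<in> carrier_vec a"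
    and "\<And>i z. i < a \<Longrightarrow> z \<in> S \<Longrightarrow> G z $ i = g i z"
    and "\<And>i. i < a \<Longrightarrow> g i holomorphic_on S"
  shows "hol_vec S a G"
  unfolding hol_vec_def
proof (intro conjI allI impI ballI)
  fix i assume i: "i < a"
  show "(\<lambda>z. G z $ i) holomorphic_on S"
    by (rule holomorphic_transform[OF assms(3)[OF i]]) (use assms(2)[OF i] in auto)
qed (use assms in auto)

lemma hol_mat_mult:
  assumes F: "hol_mat S a b F" and G: "hol_mat S b c G"
  shows "hol_mat S a c (\<lambda>z. F z * G z)"
proof (rule hol_mat_entrywise[where g = "\<lambda>i j z. \<Sum>k\<in>{0..<b}. F z $$ (i,k) * G z $$ (k,j)"])
  fix z assume "z \<in> S"
  thus "F z * G z \<in> carrier_mat a c" using hol_matD(1)[OF F] hol_matD(1)[OF G] by (meson mult_carrier_mat)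
next
  fix i j z assume "i < a" "j < c" "z \<in> S"
  thus "(F z * G z) $$ (i, j) = (\<Sum>k\<in>{0..<b}. F z $$ (i,k) * G z $$ (k,j))"
    using hol_matD(1)[OF F \<open>z \<in> S\<close>] hol_matD(1)[OF G \<open>z \<in> S\<close>] by (simp add: scalar_prod_def)
qed (use hol_matD(2)[OF F] hol_matD(2)[OF G] in \<open>auto intro!: holomorphic_intros\<close>)

lemma hol_mat_mult_vec:
  assumes F: "hol_mat S a b F" and G: "hol_vec S b G"
  shows "hol_vec S a (\<lambda>z. F z *\<^sub>v G z)"
proof (rule hol_vec_entrywise[where g = "\<lambda>i z. \<Sum>k\<in>{0..<b}. F z $$ (i,k) * G z $ k"])
  fix z assume "z \<in> S"
  thus "F z *\<^sub>v G z \<in> carrier_vec a" using hol_matD(1)[OF F] hol_vecD(1)[OF G] by (meson mult_mat_vec_carrier)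
next
  fix i z assume "i < a" "z \<in> S"
  thus "(F z *\<^sub>v G z) $ i = (\<Sum>k\<in>{0..<b}. F z $$ (i,k) * G z $ k)"
    using hol_matD(1)[OF F \<open>z \<in> S\<close>] hol_vecD(1)[OF G \<open>z \<in> S\<close>] by (simp add: scalar_prod_def)
qed (use hol_matD(2)[OF F] hol_vecD(2)[OF G] in \<open>auto intro!: holomorphic_intros\<close>)

lemma hol_mat_minus: assumes F: "hol_mat S a b F" and G: "hol_mat S a b G"
  shows "hol_mat S a b (\<lambda>z. F z - G z)"
proof (rule hol_mat_entrywise[where g = "\<lambda>i j z. F z $$ (i,j) - G z $$ (i,j)"])
  fix z assume "z \<in> S" thus "F z - G z \<in> carrier_mat a b" using hol_matD(1)[OF F] hol_matD(1)[OF G] by (meson minus_carrier_mat)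
next
  fix i j z assume ij: "i < a" "j < b" and z: "z \<in> S"
  show "(F z - G z) $$ (i, j) = F z $$ (i,j) - G z $$ (i,j)"
      using hol_matD(1)[OF G z] ij by simp
qed (use hol_matD(2)[OF F] hol_matD(2)[OF G] in \<open>auto intro!: holomorphic_intros\<close>)

lemma hol_mat_uminus: assumes F: "hol_mat S a b F"
  shows "hol_mat S a b (\<lambda>z. - F z)"
proof (rule hol_mat_entrywise[where g = "\<lambda>i j z. - F z $$ (i,j)"])
  fix z assume "z \<in> S" thus "- F z \<in> carrier_mat a b" using hol_matD(1)[OF F] by simp
next
  fix i j z assume ij: "i < a" "j < b" and z: "z \<in> S"
  show "(- F z) $$ (i, j) = - F z $$ (i,j)"
      using hol_matD(1)[OF F z] ij by simp
qed (use hol_matD(2)[OF F] in \<open>auto intro!: holomorphic_intros\<close>)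

lemma hol_mat_smult: assumes F: "hol_mat S a b F" and f: "f holomorphic_on S"
  shows "hol_mat S a b (\<lambda>z. f z \<cdot>\<^sub>m F z)"
proof (rule hol_mat_entrywise[where g = "\<lambda>i j z. f z * F z $$ (i,j)"])
  fix z assume "z \<in> S" thus "f z \<cdot>\<^sub>m F z \<in> carrier_mat a b" using hol_matD(1)[OF F] by simp
next
  fix i j z assume ij: "i < a" "j < b" and z: "z \<in> S"
  show "(f z \<cdot>\<^sub>m F z) $$ (i, j) = f z * F z $$ (i,j)"
      using hol_matD(1)[OF F z] ij by simp
qed (use hol_matD(2)[OF F] f in \<open>auto intro!: holomorphic_intros\<close>)

lemma hol_mat_transpose: assumes F: "hol_mat S a b F"
  shows "hol_mat S b a (\<lambda>z. transpose_mat (F z))"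
proof (rule hol_mat_entrywise[where g = "\<lambda>i j z. F z $$ (j,i)"])
  fix z assume "z \<in> S" thus "transpose_mat (F z) \<in> carrier_mat b a" using hol_matD(1)[OF F] by simp
next
  fix i j z assume ij: "i < b" "j < a" and z: "z \<in> S"
  show "transpose_mat (F z) $$ (i, j) = F z $$ (j,i)"
      using hol_matD(1)[OF F z] ij by simp
qed (use hol_matD(2)[OF F] in \<open>auto intro!: holomorphic_intros\<close>)

lemma hol_mat_const: "A \<in> carrier_mat a b \<Longrightarrow> hol_mat S a b (\<lambda>z. A)"
  unfolding hol_mat_def by auto

lemma hol_mat_mat:
  assumes "\<And>i j. i < a \<Longrightarrow> j < b \<Longrightarrow> (\<lambda>z. f z i j) holomorphic_on S"
  shows "hol_mat S a b (\<lambda>z. mat a b (\<lambda>(i,j). f z i j))"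
  unfolding hol_mat_def using assms by auto

lemma hol_vec_vec:
  assumes "\<And>i. i < a \<Longrightarrow> (\<lambda>z. f z i) holomorphic_on S"
  shows "hol_vec S a (\<lambda>z. vec a (\<lambda>i. f z i))"
  unfolding hol_vec_def using assms by auto

lemma hol_mat_col: assumes F: "hol_mat S a b F" and j: "j < b" shows "hol_vec S a (\<lambda>z. col (F z) j)"
proof (rule hol_vec_entrywise[where g = "\<lambda>i z. F z $$ (i,j)"])
  fix i z assume "i < a" "z \<in> S" thus "col (F z) j $ i = F z $$ (i,j)" using hol_matD(1)[OF F \<open>z \<in> S\<close>] j by auto
qed (use hol_matD[OF F] j in auto)

lemma hol_det:
  assumes F: "hol_mat S n n F"
  shows "(\<lambda>z. det (F z)) holomorphic_on S"
proof -
  have "(\<lambda>z. \<Sum>p\<in>{p. p permutes {0..<n}}. signof p * (\<Prod>i=0..<n. F z $$ (i, p i))) holomorphic_on S"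
  proof (intro holomorphic_intros)
    fix p i assume "p \<in> {p. p permutes {0..<n}}" "i \<in> {0..<n}"
    hence "i < n" "p i < n" by (auto simp: permutes_in_image)
    thus "(\<lambda>z. F z $$ (i, p i)) holomorphic_on S" using hol_matD(2)[OF F] by auto
  qed
  thus ?thesis
    by (rule holomorphic_transform) (use hol_matD(1)[OF F] in \<open>auto simp: det_def\<close>)
qed

lemma hol_mat_delete: assumes F: "hol_mat S n n F" and i: "i < n" and j: "j < n"
  shows "hol_mat S (n-1) (n-1) (\<lambda>z. mat_delete (F z) i j)"
proof (rule hol_mat_entrywise[where g = "\<lambda>a b z. F z $$ (if a < i then a else Suc a, if b < j then b else Suc b)"])
  fix z assume "z \<in> S" thus "mat_delete (F z) i j \<in> carrier_mat (n-1) (n-1)"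
    using hol_matD(1)[OF F] mat_delete_carrier by blast
next
  fix a b z assume ab: "a < n - 1" "b < n - 1" and z: "z \<in> S"
  thus "mat_delete (F z) i j $$ (a, b) = F z $$ (if a < i then a else Suc a, if b < j then b else Suc b)"
    using hol_matD(1)[OF F z] by (auto simp: mat_delete_def)
next
  fix a b assume ab: "a < n - 1" "b < n - 1"
  thus "(\<lambda>z. F z $$ (if a < i then a else Suc a, if b < j then b else Suc b)) holomorphic_on S"
    using hol_matD(2)[OF F] by auto
qed

lemma hol_adj: assumes F: "hol_mat S n n F"
  shows "hol_mat S n n (\<lambda>z. adj_mat (F z))"
proof (rule hol_mat_entrywise[where g = "\<lambda>a b z. (-1)^(b+a) * det (mat_delete (F z) b a)"])
  fix z assume "z \<in> S" thus "adj_mat (F z) \<in> carrier_mat n n"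
    using hol_matD(1)[OF F] adj_mat(1) by blast
next
  fix a b z assume ab: "a < n" "b < n" and z: "z \<in> S"
  thus "adj_mat (F z) $$ (a, b) = (-1)^(b+a) * det (mat_delete (F z) b a)"
    using hol_matD(1)[OF F z] by (auto simp: adj_mat_def cofactor_def)
next
  fix a b assume ab: "a < n" "b < n"
  show "(\<lambda>z. (-1)^(b+a) * det (mat_delete (F z) b a)) holomorphic_on S"
    using hol_det[OF hol_mat_delete[OF F ab(2,1)]] by (intro holomorphic_intros)
qed

lemma hol_minv:
  assumes F: "hol_mat S n n F" and d: "\<And>z. z \<in> S \<Longrightarrow> det (F z) \<noteq> 0"
  shows "hol_mat S n n (\<lambda>z. minv (F z))"
  unfolding minv_def
  by (rule hol_mat_smult[OF hol_adj[OF F]]) (use hol_det[OF F] d in \<open>auto intro!: holomorphic_intros\<close>)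

lemma holomorphic_eq_at_point:
  assumes S: "open S" "z0 \<in> S" and f: "f holomorphic_on S" and g: "g holomorphic_on S"
    and eq: "\<And>z. z \<in> S \<Longrightarrow> z \<noteq> z0 \<Longrightarrow> f z = g z"
  shows "f z0 = g z0"
proof -
  have "(f \<longlongrightarrow> f z0) (at z0)" "(g \<longlongrightarrow> g z0) (at z0)"
    using f g S holomorphic_on_imp_continuous_on continuous_on_eq_continuous_at isCont_def by blast+
  moreover have "eventually (\<lambda>z. f z = g z) (at z0)"
    using S eq by (auto simp: eventually_at_topological)
  ultimately show ?thesis
    by (metis (mono_tags, lifting) filterlim_cong tendsto_unique at_neq_bot)
qed

lemma holomorphic_nonzero_nhd:
  assumes S: "open S" "z0 \<in> S" and f: "f holomorphic_on S" and f0: "f z0 \<noteq> 0"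
  obtains S' where "open S'" "z0 \<in> S'" "S' \<subseteq> S" "\<And>z. z \<in> S' \<Longrightarrow> f z \<noteq> 0"
proof
  show "open (S \<inter> f -` (- {0}))"
    by (rule continuous_open_preimage[OF holomorphic_on_imp_continuous_on[OF f] S(1)]) auto
qed (use S f0 in auto)

lemma minv_inverse: assumes A: "A \<in> carrier_mat n n" and d: "det A \<noteq> 0"
  shows "minv A \<in> carrier_mat n n" "A * minv A = 1\<^sub>m n" "minv A * A = 1\<^sub>m n"
proof -
  note adj = adj_mat[OF A]
  show "minv A \<in> carrier_mat n n" unfolding minv_def using adj by auto
  have "A * minv A = (1 / det A) \<cdot>\<^sub>m (A * adj_mat A)" unfolding minv_def
    using mult_smult_distrib[OF A adj(1)] .
  also have "\<dots> = 1\<^sub>m n" unfolding adj(2) using d by (intro eq_matI) auto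
  finally show "A * minv A = 1\<^sub>m n" .
  have "minv A * A = (1 / det A) \<cdot>\<^sub>m (adj_mat A * A)" unfolding minv_def
    using mult_smult_assoc_mat[OF adj(1) A] .
  also have "\<dots> = 1\<^sub>m n" unfolding adj(3) using d by (intro eq_matI) auto
  finally show "minv A * A = 1\<^sub>m n" .
qed

lemma minv_carrier: assumes A: "A \<in> carrier_mat k k" shows "minv A \<in> carrier_mat k k"
  unfolding minv_def using adj_mat(1)[OF A] by simp

lemma mat_inverse_unique:
  fixes A B C :: "'a :: comm_ring_1 mat"
  assumes "A \<in> carrier_mat n n" "B \<in> carrier_mat n n" "C \<in> carrier_mat n n"
    and "B * A = 1\<^sub>m n" "A * C = 1\<^sub>m n"
  shows "B = C"
proof -
  have "B = B * (A * C)" using assms by (metis right_mult_one_mat)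
  also have "\<dots> = (B * A) * C" by (rule assoc_mult_mat[symmetric, OF assms(2,1,3)])
  also have "\<dots> = C" using assms by (metis left_mult_one_mat)
  finally show ?thesis .
qed

lemma minv_mult_mat: assumes A: "A \<in> carrier_mat n n" and B: "B \<in> carrier_mat n n"
  and dA: "det A \<noteq> 0" and dB: "det B \<noteq> 0"
  shows "minv (A * B) = minv B * minv A"
proof -
  have AB: "A * B \<in> carrier_mat n n" using A B by simp
  have dAB: "det (A * B) \<noteq> 0" using det_mult[OF A B] dA dB by simp
  note mA = minv_inverse[OF A dA] and mB = minv_inverse[OF B dB] and mAB = minv_inverse[OF AB dAB]
  have "(A * B) * (minv B * minv A) = A * (B * minv B) * minv A"
    using A B mA(1) mB(1) by (simp add: assoc_mult_mat[of _ n n _ n _ n])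
  also have "\<dots> = 1\<^sub>m n" using mA mB A by simp
  finally have right_inv: "(A * B) * (minv B * minv A) = 1\<^sub>m n" .
  show ?thesis by (rule mat_inverse_unique[OF AB mAB(1) _ mAB(3) right_inv]) (use mA(1) mB(1) in simp)
qed

lemma minv_transpose: assumes A: "A \<in> carrier_mat n n" and dA: "det A \<noteq> 0"
  shows "minv (transpose_mat A) = transpose_mat (minv A)"
proof -
  have At: "transpose_mat A \<in> carrier_mat n n" using A by simp
  have dAt: "det (transpose_mat A) \<noteq> 0" using det_transpose[OF A] dA by simp
  note mA = minv_inverse[OF A dA] and mAt = minv_inverse[OF At dAt]
  have "transpose_mat A * transpose_mat (minv A) = transpose_mat (minv A * A)"
    using transpose_mult[OF mA(1) A] by simp
  also have "\<dots> = 1\<^sub>m n" using mA by simp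
  finally have right_inv: "transpose_mat A * transpose_mat (minv A) = 1\<^sub>m n" .
  show ?thesis by (rule mat_inverse_unique[OF At mAt(1) _ mAt(3) right_inv]) (use mA(1) in simp)
qed

lemma mult_mat_vec_zero[simp]: "A \<in> carrier_mat nr nc \<Longrightarrow> A *\<^sub>v 0\<^sub>v nc = (0\<^sub>v nr :: 'a :: comm_ring_1 vec)"
  by (intro eq_vecI) (auto simp: scalar_prod_def)

lemma zero_mult_mat_vec[simp]: "v \<in> carrier_vec nc \<Longrightarrow> 0\<^sub>m nr nc *\<^sub>v v = (0\<^sub>v nr :: 'a :: comm_ring_1 vec)"
  by (intro eq_vecI) (auto simp: scalar_prod_def)

lemma mult_eq_zero_if_cols_zero:
  fixes A B :: "'a :: comm_ring_1 mat"
  assumes A: "A \<in> carrier_mat nr n" and B: "B \<in> carrier_mat n nc"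
    and cols: "\<And>j. j < nc \<Longrightarrow> A *\<^sub>v col B j = 0\<^sub>v nr"
  shows "A * B = 0\<^sub>m nr nc"
proof (rule eq_matI)
  fix i j assume "i < dim_row (0\<^sub>m nr nc :: 'a mat)" "j < dim_col (0\<^sub>m nr nc :: 'a mat)"
  hence ij: "i < nr" "j < nc" by auto
  have "(A * B) $$ (i,j) = (A *\<^sub>v col B j) $ i" using A B ij by simp
  thus "(A * B) $$ (i,j) = 0\<^sub>m nr nc $$ (i,j)" using cols[OF ij(2)] ij by simp
qed (use A B in auto)

lemma mult_mat_vec_unit_vec: fixes A :: "'a :: comm_ring_1 mat" assumes A: "A \<in> carrier_mat a k" and j: "j < k"
  shows "A *\<^sub>v unit_vec k j = col A j"
proof (rule eq_vecI)
  fix i assume "i < dim_vec (col A j)" hence i: "i < a" using A by simp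
  have "(A *\<^sub>v unit_vec k j) $ i = (\<Sum>l\<in>{0..<k}. A $$ (i,l) * (if l = j then 1 else 0))"
    using A i j by (auto simp: scalar_prod_def intro!: sum.cong)
  also have "\<dots> = A $$ (i,j)" using j by (simp add: if_distrib cong: if_cong)
  finally show "(A *\<^sub>v unit_vec k j) $ i = col A j $ i" using A i j by simp
qed (use A in simp)

lemma det_zero_if_zero_row:
  fixes M :: "'a :: comm_ring_1 mat"
  assumes M: "M \<in> carrier_mat k k" and i: "i < k" and row0: "\<And>l. l < k \<Longrightarrow> M $$ (i,l) = 0"
  shows "det M = 0"
proof -
  have "M = mat\<^sub>r k k (\<lambda>l. if l = i then 0\<^sub>v k else row M l)"
    by (rule eq_matI) (use M row0 in auto)
  also have "det \<dots> = 0" by (rule det_row_0) (use M i in auto)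
  finally show ?thesis .
qed

text \<open>Otherwise the first \<open>j + 1\<close> columns would lie in a \<open>j\<close>-dimensional coordinate space.\<close>
lemma injective_mat_no_zero_corner:
  fixes A :: "complex mat"
  assumes A: "A \<in> carrier_mat n r" and j: "j < r" and rn: "r \<le> n"
    and z: "\<And>i k. j \<le> i \<Longrightarrow> i < n \<Longrightarrow> k \<le> j \<Longrightarrow> A $$ (i,k) = 0"
    and inj: "\<And>c. c \<in> carrier_vec r \<Longrightarrow> A *\<^sub>v c = 0\<^sub>v n \<Longrightarrow> c = 0\<^sub>v r"
  shows False
proof -
  define M where "M = mat (Suc j) (Suc j) (\<lambda>(i,k). A $$ (i,k))"
  have Mc: "M \<in> carrier_mat (Suc j) (Suc j)" unfolding M_def by simp
  have "det M = 0"
    by (rule det_zero_if_zero_row[OF Mc, of j]) (use z j rn in \<open>auto simp: M_def\<close>)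
  then obtain c where c: "c \<in> carrier_vec (Suc j)" "c \<noteq> 0\<^sub>v (Suc j)" "M *\<^sub>v c = 0\<^sub>v (Suc j)"
    using det_0_iff_vec_prod_zero[OF Mc] by auto
  define c' where "c' = vec r (\<lambda>k. if k \<le> j then c $ k else 0)"
  have "A *\<^sub>v c' = 0\<^sub>v n"
  proof (rule eq_vecI)
    fix i assume "i < dim_vec (0\<^sub>v n :: complex vec)"
    hence i: "i < n" by simp
    have "(A *\<^sub>v c') $ i = (\<Sum>k\<in>{0..<r}. A $$ (i,k) * (if k \<le> j then c $ k else 0))"
      using A i by (auto simp: scalar_prod_def c'_def intro!: sum.cong)
    also have "\<dots> = (\<Sum>k\<in>{0..<Suc j}. A $$ (i,k) * c $ k)"
      by (rule sum.mono_neutral_cong_right) (use j in auto)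
    also have "\<dots> = 0"
    proof (cases "i \<le> j")
      case True
      have "(M *\<^sub>v c) $ i = (\<Sum>k\<in>{0..<Suc j}. A $$ (i,k) * c $ k)"
        using True c(1) by (auto simp: scalar_prod_def M_def intro!: sum.cong)
      thus ?thesis using c(3) True by simp
    next
      case False thus ?thesis using z[of i] i by (intro sum.neutral) auto
    qed
    finally show "(A *\<^sub>v c') $ i = 0\<^sub>v n $ i" using i by simp
  qed (use A in auto)
  hence c'0: "c' = 0\<^sub>v r" using inj by (auto simp: c'_def)
  have "c $ k = 0" if k: "k < Suc j" for k
  proof -
    have "c' $ k = c $ k" using k j by (simp add: c'_def)
    thus ?thesis using c'0 k j by simp
  qed
  hence "c = 0\<^sub>v (Suc j)" using c(1) by (intro eq_vecI) auto
  thus False using c(2) by simp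
qed

lemma kernel_dim_invertible_mult:
  fixes T0 UL0 UR0 D0 :: "complex mat"
  assumes T0: "T0 \<in> carrier_mat n n" and UL0: "UL0 \<in> carrier_mat n n" and UR0: "UR0 \<in> carrier_mat n n"
    and dL: "det UL0 \<noteq> 0" and dR: "det UR0 \<noteq> 0" and eq: "UL0 * T0 * UR0 = D0"
  shows "kernel_dim T0 = kernel_dim D0"
proof -
  have TU: "T0 * UR0 \<in> carrier_mat n n" using T0 UR0 by simp
  have D0c: "D0 \<in> carrier_mat n n" unfolding eq[symmetric] using UL0 T0 UR0 by simp
  have D0eq: "D0 = UL0 * (T0 * UR0)" unfolding eq[symmetric] using UL0 T0 UR0 by simp
  have mk: "mat_kernel D0 = mat_kernel (T0 * UR0)"
    unfolding D0eq by (rule mat_kernel_mult_eq[OF TU UL0 minv_inverse(1)[OF UL0 dL] minv_inverse(3)[OF UL0 dL]])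
  have "kernel.dim n (T0 * UR0) = kernel.dim n T0"
    by (rule mat_kernel_dim_mult_eq_right[OF T0 UR0 minv_inverse(1)[OF UR0 dR] minv_inverse(2)[OF UR0 dR]])
  moreover have "kernel.dim n D0 = kernel.dim n (T0 * UR0)" using mk by simp
  ultimately show ?thesis unfolding kernel_dim_def using T0 D0c by simp
qed

lemma kernel_dim_zero_mat: "kernel.dim c (0\<^sub>m c c :: complex mat) = c"
proof -
  have ref: "row_echelon_form (0\<^sub>m c c :: complex mat)"
    unfolding row_echelon_form_def
    by (rule exI[of _ "\<lambda>_. c"], rule pivot_funI) auto
  have e: "{i. i < c \<and> row (0\<^sub>m c c :: complex mat) i \<noteq> 0\<^sub>v c} = {}" by auto
  have "kernel.dim c (0\<^sub>m c c :: complex mat) = c - card {i. i < c \<and> row (0\<^sub>m c c :: complex mat) i \<noteq> 0\<^sub>v c}"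
    by (rule find_base_vectors(6)[OF ref zero_carrier_mat])
  thus ?thesis unfolding e by simp
qed

section \<open>Diagonal matrices of powers of \<open>z - z0\<close>\<close>

lemma chi_diag_carrier[simp]: "chi_diag k ms z0 z \<in> carrier_mat k k"
  unfolding chi_diag_def by simp

lemma chi_diag_dims[simp]: "dim_row (chi_diag k ms z0 z) = k" "dim_col (chi_diag k ms z0 z) = k"
  unfolding chi_diag_def by simp_all

lemma chi_diag_index: "i < k \<Longrightarrow> j < k \<Longrightarrow> chi_diag k ms z0 z $$ (i,j) = (if i = j then (z - z0)^(ms!i) else 0)"
  unfolding chi_diag_def by simp

lemma transpose_chi_diag: "transpose_mat (chi_diag k ms z0 z) = chi_diag k ms z0 z"
  by (rule eq_matI) (auto simp: chi_diag_index)

lemma mult_diag_right: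
  fixes A :: "'a :: comm_ring_1 mat"
  assumes A: "A \<in> carrier_mat a k" and i: "i < a" and j: "j < k"
  shows "(A * mat k k (\<lambda>(i,j). if i = j then d i else 0)) $$ (i,j) = A $$ (i,j) * d j"
proof -
  have "(A * mat k k (\<lambda>(i,j). if i = j then d i else 0)) $$ (i,j) = (\<Sum>l\<in>{0..<k}. A $$ (i,l) * (if l = j then d j else 0))"
    using A i j by (auto simp: scalar_prod_def intro!: sum.cong)
  also have "\<dots> = (\<Sum>l\<in>{0..<k}. if l = j then A $$ (i,j) * d j else 0)" by (intro sum.cong) auto
  also have "\<dots> = A $$ (i,j) * d j" using j by simp
  finally show ?thesis .
qed

lemma mult_diag_left:
  fixes A :: "'a :: comm_ring_1 mat"
  assumes A: "A \<in> carrier_mat k b" and i: "i < k" and j: "j < b"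
  shows "(mat k k (\<lambda>(i,j). if i = j then d i else 0) * A) $$ (i,j) = d i * A $$ (i,j)"
proof -
  have "(mat k k (\<lambda>(i,j). if i = j then d i else 0) * A) $$ (i,j) = (\<Sum>l\<in>{0..<k}. (if i = l then d i else 0) * A $$ (l,j))"
    using A i j by (auto simp: scalar_prod_def intro!: sum.cong)
  also have "\<dots> = (\<Sum>l\<in>{0..<k}. if l = i then d i * A $$ (i,j) else 0)" by (intro sum.cong) auto
  also have "\<dots> = d i * A $$ (i,j)" using i by simp
  finally show ?thesis .
qed

lemma mult_chi_diag_right: "A \<in> carrier_mat a k \<Longrightarrow> i < a \<Longrightarrow> j < k \<Longrightarrow>
   (A * chi_diag k ms z0 z) $$ (i,j) = A $$ (i,j) * (z - z0)^(ms!j)"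
  unfolding chi_diag_def by (rule mult_diag_right)

lemma mult_chi_diag_left: "A \<in> carrier_mat k b \<Longrightarrow> i < k \<Longrightarrow> j < b \<Longrightarrow>
   (chi_diag k ms z0 z * A) $$ (i,j) = (z - z0)^(ms!i) * A $$ (i,j)"
  unfolding chi_diag_def by (rule mult_diag_left)

definition chi_diag_inv :: "nat \<Rightarrow> nat list \<Rightarrow> complex \<Rightarrow> complex \<Rightarrow> complex mat" where
  "chi_diag_inv k ms z0 z = mat k k (\<lambda>(i,j). if i = j then 1 / (z - z0)^(ms ! i) else 0)"

lemma chi_diag_inv_index: "i < k \<Longrightarrow> j < k \<Longrightarrow> chi_diag_inv k ms z0 z $$ (i,j) = (if i = j then 1 / (z - z0)^(ms!i) else 0)"
  "chi_diag_inv k ms z0 z \<in> carrier_mat k k"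
  unfolding chi_diag_inv_def by simp_all

lemma chi_diag_inv_dims[simp]: "dim_row (chi_diag_inv k ms z0 z) = k" "dim_col (chi_diag_inv k ms z0 z) = k"
  unfolding chi_diag_inv_def by simp_all

lemma chi_diag_inv:
  assumes z: "z \<noteq> z0"
  shows "chi_diag k ms z0 z * chi_diag_inv k ms z0 z = 1\<^sub>m k"
    "chi_diag_inv k ms z0 z * chi_diag k ms z0 z = 1\<^sub>m k"
    "chi_diag_inv k ms z0 z \<in> carrier_mat k k"
    "det (chi_diag k ms z0 z) \<noteq> 0"
    "minv (chi_diag k ms z0 z) = chi_diag_inv k ms z0 z"
proof -
  show right_inv: "chi_diag k ms z0 z * chi_diag_inv k ms z0 z = 1\<^sub>m k"
  proof (rule eq_matI)
    fix i j assume "i < dim_row (1\<^sub>m k)" "j < dim_col (1\<^sub>m k :: complex mat)"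
    thus "(chi_diag k ms z0 z * chi_diag_inv k ms z0 z) $$ (i, j) = 1\<^sub>m k $$ (i, j)"
      using z by (subst mult_chi_diag_left[OF chi_diag_inv_index(2)]) (auto simp: chi_diag_inv_index)
  qed auto
  show "chi_diag_inv k ms z0 z * chi_diag k ms z0 z = 1\<^sub>m k"
  proof (rule eq_matI)
    fix i j assume "i < dim_row (1\<^sub>m k)" "j < dim_col (1\<^sub>m k :: complex mat)"
    thus "(chi_diag_inv k ms z0 z * chi_diag k ms z0 z) $$ (i, j) = 1\<^sub>m k $$ (i, j)"
      using z by (subst mult_chi_diag_right[OF chi_diag_inv_index(2)]) (auto simp: chi_diag_inv_index)
  qed auto
  show inv_carrier: "chi_diag_inv k ms z0 z \<in> carrier_mat k k" unfolding chi_diag_inv_def by simp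
  have "det (chi_diag k ms z0 z) * det (chi_diag_inv k ms z0 z) = 1"
    using det_mult[OF chi_diag_carrier inv_carrier, of ms z0 z] right_inv by simp
  thus d: "det (chi_diag k ms z0 z) \<noteq> 0" by auto
  show "minv (chi_diag k ms z0 z) = chi_diag_inv k ms z0 z"
    by (rule mat_inverse_unique[OF chi_diag_carrier minv_inverse(1)[OF chi_diag_carrier d] inv_carrier
          minv_inverse(3)[OF chi_diag_carrier d] right_inv])
qed

lemma chi_diag_mult_vec: "w \<in> carrier_vec k \<Longrightarrow> i < k \<Longrightarrow>
   (chi_diag k ms z0 z *\<^sub>v w) $ i = (z - z0)^(ms!i) * w $ i"
proof -
  assume w: "w \<in> carrier_vec k" and i: "i < k"
  have "(chi_diag k ms z0 z *\<^sub>v w) $ i = (\<Sum>l\<in>{0..<k}. (if i = l then (z - z0)^(ms!i) else 0) * w $ l)"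
    using w i by (auto simp: scalar_prod_def chi_diag_index intro!: sum.cong)
  also have "\<dots> = (\<Sum>l\<in>{0..<k}. if l = i then (z - z0)^(ms!i) * w $ i else 0)" by (intro sum.cong) auto
  also have "\<dots> = (z - z0)^(ms!i) * w $ i" using i by simp
  finally show ?thesis .
qed

lemma col_mult_chi_diag: assumes A: "A \<in> carrier_mat a k" and j: "j < k"
  shows "col (A * chi_diag k ms z0 z) j = (z - z0)^(ms!j) \<cdot>\<^sub>v col A j"
proof (rule eq_vecI)
  fix i assume "i < dim_vec ((z - z0)^(ms!j) \<cdot>\<^sub>v col A j)" hence i: "i < a" using A by simp
  have "col (A * chi_diag k ms z0 z) j $ i = (A * chi_diag k ms z0 z) $$ (i,j)" using A i j by simp
  also have "\<dots> = A $$ (i,j) * (z - z0)^(ms!j)" by (rule mult_chi_diag_right[OF A i j])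
  finally show "col (A * chi_diag k ms z0 z) j $ i = ((z - z0)^(ms!j) \<cdot>\<^sub>v col A j) $ i"
    using A i j by (simp add: mult.commute)
qed (use A in simp)

lemma kernel_dim_chi_diag:
  assumes len: "length ms = n" and sorted: "\<And>i j. i \<le> j \<Longrightarrow> j < n \<Longrightarrow> ms!j \<le> ms!i"
  defines "c \<equiv> (LEAST i. i = n \<or> ms!i = 0)"
  shows "kernel_dim (chi_diag n ms z0 z0) = c" "c \<le> n"
    "\<And>i. i < c \<Longrightarrow> 0 < ms!i" "\<And>i. c \<le> i \<Longrightarrow> i < n \<Longrightarrow> ms!i = 0"
proof -
  show cn: "c \<le> n" unfolding c_def by (rule Least_le) simp
  show pos: "0 < ms!i" if "i < c" for i
  proof -
    have "\<not> (i = n \<or> ms!i = 0)" using not_less_Least[OF that[unfolded c_def]] .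
    thus ?thesis by simp
  qed
  show z: "ms!i = 0" if "c \<le> i" "i < n" for i
  proof -
    have "c = n \<or> ms!c = 0" unfolding c_def by (rule LeastI[of _ n]) simp
    hence "ms!c = 0" using that by simp
    thus ?thesis using sorted[OF that] by simp
  qed
  have eq: "chi_diag n ms z0 z0 = four_block_mat (0\<^sub>m c c) (0\<^sub>m c (n-c)) (0\<^sub>m (n-c) c) (1\<^sub>m (n-c))"
  proof (rule eq_matI)
    fix i j assume "i < dim_row (four_block_mat (0\<^sub>m c c) (0\<^sub>m c (n-c)) (0\<^sub>m (n-c) c) (1\<^sub>m (n-c)) :: complex mat)"
      "j < dim_col (four_block_mat (0\<^sub>m c c) (0\<^sub>m c (n-c)) (0\<^sub>m (n-c) c) (1\<^sub>m (n-c)) :: complex mat)"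
    hence ij: "i < n" "j < n" using cn by auto
    show "chi_diag n ms z0 z0 $$ (i, j) = four_block_mat (0\<^sub>m c c) (0\<^sub>m c (n-c)) (0\<^sub>m (n-c) c) (1\<^sub>m (n-c)) $$ (i, j)"
      using ij cn pos[of i] z[of i] by (auto simp: chi_diag_index)
  qed (use cn in auto)
  have "kernel.dim (c + (n-c)) (chi_diag n ms z0 z0) = kernel.dim c (0\<^sub>m c c :: complex mat) + kernel.dim (n-c) (1\<^sub>m (n-c) :: complex mat)"
    by (rule kernel_four_block_0_mat[OF eq]) auto
  thus "kernel_dim (chi_diag n ms z0 z0) = c"
    unfolding kernel_dim_def kernel_dim_zero_mat kernel_one_mat(1) using cn by simp
qed

section \<open>Orders of zeros\<close>

lemma higher_deriv_power_mult:
  assumes g: "g holomorphic_on S" and S: "open S" "z0 \<in> S"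
  shows "j < m \<Longrightarrow> (deriv ^^ j) (\<lambda>w. (w - z0)^m * g w) z0 = 0"
    and "(deriv ^^ m) (\<lambda>w. (w - z0)^m * g w) z0 = fact m * g z0"
proof -
  have h: "(\<lambda>w. (w - z0)^m) holomorphic_on S" by (intro holomorphic_intros)
  have D: "(deriv ^^ i) (\<lambda>w. (w - z0)^m) z0 = pochhammer (of_nat (Suc m - i)) i * 0 ^ (m - i)" for i
    using higher_deriv_power[of i z0 m z0] by simp
  note M = higher_deriv_mult[OF h g S]
  {
    assume j: "j < m"
    show "(deriv ^^ j) (\<lambda>w. (w - z0)^m * g w) z0 = 0"
      unfolding M by (intro sum.neutral) (use j in \<open>auto simp: D\<close>)
  }
  have "(deriv ^^ m) (\<lambda>w. (w - z0)^m * g w) z0 =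
     (\<Sum>i = 0..m. of_nat (m choose i) * (deriv ^^ i) (\<lambda>w. (w - z0)^m) z0 * (deriv ^^ (m-i)) g z0)"
    using M .
  also have "\<dots> = (\<Sum>i \<in> {m}. of_nat (m choose i) * (deriv ^^ i) (\<lambda>w. (w - z0)^m) z0 * (deriv ^^ (m-i)) g z0)"
    by (intro sum.mono_neutral_right) (auto simp: D)
  also have "\<dots> = fact m * g z0" by (simp add: D pochhammer_fact)
  finally show "(deriv ^^ m) (\<lambda>w. (w - z0)^m * g w) z0 = fact m * g z0" .
qed

lemma higher_deriv_power_factor:
  assumes g: "g holomorphic_on S" and S: "open S" "z0 \<in> S"
    and f: "\<And>z. z \<in> S \<Longrightarrow> f z = (z - z0)^m * g z"
  shows "j < m \<Longrightarrow> (deriv ^^ j) f z0 = 0"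
    and "(deriv ^^ m) f z0 = fact m * g z0"
proof -
  have ev: "(deriv ^^ i) f z0 = (deriv ^^ i) (\<lambda>w. (w - z0)^m * g w) z0" for i
    by (rule higher_deriv_cong_ev[OF _ refl]) (use S f in \<open>auto simp: eventually_nhds\<close>)
  show "j < m \<Longrightarrow> (deriv ^^ j) f z0 = 0" unfolding ev using higher_deriv_power_mult[OF g S] by auto
  show "(deriv ^^ m) f z0 = fact m * g z0" unfolding ev using higher_deriv_power_mult[OF g S] by auto
qed

lemma power_factor_of_vanishing_derivs:
  assumes f: "f holomorphic_on S" and S: "open S" "z0 \<in> S"
    and d: "\<And>j. j < p \<Longrightarrow> (deriv ^^ j) f z0 = 0"
  shows "\<exists>g. g holomorphic_on S \<and> (\<forall>z\<in>S. f z = (z - z0)^p * g z)"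
  using d
proof (induction p)
  case 0 thus ?case using f by (intro exI[of _ f]) auto
next
  case (Suc p)
  then obtain g where g: "g holomorphic_on S" and fg: "\<forall>z\<in>S. f z = (z - z0)^p * g z" by auto
  have "(deriv ^^ p) f z0 = fact p * g z0" using higher_deriv_power_factor(2)[OF g S] fg by auto
  with Suc.prems[of p] have g0: "g z0 = 0" by simp
  define g' where "g' = (\<lambda>z. if z = z0 then deriv g z0 else (g z - g z0) / (z - z0))"
  have "g' holomorphic_on S" unfolding g'_def
    by (rule pole_lemma[OF g]) (use S in \<open>simp add: interior_open\<close>)
  moreover have "\<forall>z\<in>S. f z = (z - z0)^Suc p * g' z"
  proof
    fix z assume z: "z \<in> S"
    show "f z = (z - z0)^Suc p * g' z"
    proof (cases "z = z0")
      case True thus ?thesis using fg z g0 by simp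
    next
      case False thus ?thesis using fg z g0 by (simp add: g'_def)
    qed
  qed
  ultimately show ?case by blast
qed

lemma vec_zero_order_power_factor:
  fixes F G :: "complex \<Rightarrow> complex vec"
  assumes G: "hol_vec S k G" and S: "open S" "z0 \<in> S"
    and FG: "\<And>z. z \<in> S \<Longrightarrow> F z = (z - z0)^m \<cdot>\<^sub>v G z"
    and nz: "G z0 \<noteq> 0\<^sub>v k"
  shows "vec_zero_order k F z0 = m"
proof -
  have Fi: "F z $ i = (z - z0)^m * G z $ i" if "z \<in> S" "i < k" for z i
    using FG[OF that(1)] hol_vecD(1)[OF G that(1)] that(2) by simp
  note HD = higher_deriv_power_factor[OF hol_vecD(2)[OF G] S Fi]
  have "\<exists>i<k. G z0 $ i \<noteq> 0"
  proof (rule ccontr)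
    assume "\<not> (\<exists>i<k. G z0 $ i \<noteq> 0)"
    hence "G z0 = 0\<^sub>v k" using hol_vecD(1)[OF G S(2)] by (intro eq_vecI) auto
    thus False using nz by simp
  qed
  then obtain i where i: "i < k" "G z0 $ i \<noteq> 0" by blast
  show ?thesis unfolding vec_zero_order_def
  proof (rule Least_equality)
    show "\<exists>i<k. (deriv ^^ m) (\<lambda>z. F z $ i) z0 \<noteq> 0"
      using i HD(2)[OF i(1)] by auto
  next
    fix y assume "\<exists>i<k. (deriv ^^ y) (\<lambda>z. F z $ i) z0 \<noteq> 0"
    then obtain i where "i < k" "(deriv ^^ y) (\<lambda>z. F z $ i) z0 \<noteq> 0" by auto
    thus "m \<le> y" using HD(1) by (meson not_le)
  qed
qed

lemma vec_power_factor_of_vanishing_derivs: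
  fixes F :: "complex \<Rightarrow> complex vec"
  assumes F: "hol_vec S k F" and S: "open S" "z0 \<in> S"
    and d: "\<And>i j. i < k \<Longrightarrow> j < p \<Longrightarrow> (deriv ^^ j) (\<lambda>z. F z $ i) z0 = 0"
  shows "\<exists>G. hol_vec S k G \<and> (\<forall>z\<in>S. F z = (z - z0)^p \<cdot>\<^sub>v G z)"
proof -
  have "\<forall>i\<in>{..<k}. \<exists>g. g holomorphic_on S \<and> (\<forall>z\<in>S. F z $ i = (z - z0)^p * g z)"
    using power_factor_of_vanishing_derivs[OF hol_vecD(2)[OF F] S d] by auto
  then obtain g where g: "\<And>i. i < k \<Longrightarrow> g i holomorphic_on S \<and> (\<forall>z\<in>S. F z $ i = (z - z0)^p * g i z)"
    by (metis lessThan_iff bchoice)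
  define G where "G = (\<lambda>z. vec k (\<lambda>i. g i z))"
  have "hol_vec S k G" unfolding G_def by (rule hol_vec_vec) (use g in auto)
  moreover have "\<forall>z\<in>S. F z = (z - z0)^p \<cdot>\<^sub>v G z"
  proof
    fix z assume z: "z \<in> S"
    show "F z = (z - z0)^p \<cdot>\<^sub>v G z"
      by (rule eq_vecI) (use g z hol_vecD(1)[OF F z] in \<open>auto simp: G_def\<close>)
  qed
  ultimately show ?thesis by blast
qed

lemma vec_zero_order_factor:
  fixes F :: "complex \<Rightarrow> complex vec"
  assumes F: "hol_vec S k F" and S: "open S" "z0 \<in> S"
    and ex: "\<exists>m. \<exists>i<k. (deriv ^^ m) (\<lambda>z. F z $ i) z0 \<noteq> 0"
  shows "\<exists>G. hol_vec S k G \<and> (\<forall>z\<in>S. F z = (z - z0)^(vec_zero_order k F z0) \<cdot>\<^sub>v G z) \<and> G z0 \<noteq> 0\<^sub>v k"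
proof -
  let ?m = "vec_zero_order k F z0"
  have d: "(deriv ^^ j) (\<lambda>z. F z $ i) z0 = 0" if "i < k" "j < ?m" for i j
    using not_less_Least[OF that(2)[unfolded vec_zero_order_def]] that(1) by auto
  from vec_power_factor_of_vanishing_derivs[OF F S d] obtain G where G: "hol_vec S k G"
    and FG: "\<forall>z\<in>S. F z = (z - z0)^?m \<cdot>\<^sub>v G z" by blast
  have "\<exists>i<k. (deriv ^^ ?m) (\<lambda>z. F z $ i) z0 \<noteq> 0"
    unfolding vec_zero_order_def by (rule LeastI_ex[OF ex])
  then obtain i where i: "i < k" "(deriv ^^ ?m) (\<lambda>z. F z $ i) z0 \<noteq> 0" by auto
  have Fi: "F z $ i = (z - z0)^?m * G z $ i" if "z \<in> S" for z
    using FG that hol_vecD(1)[OF G that] i(1) by simp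
  have "G z0 $ i \<noteq> 0" using higher_deriv_power_factor(2)[OF hol_vecD(2)[OF G i(1)] S Fi] i by simp
  hence "G z0 \<noteq> 0\<^sub>v k" using i(1) by auto
  thus ?thesis using G FG by blast
qed

lemma vec_zero_order_cong:
  assumes S: "open S" "z0 \<in> S" and eq: "\<And>z. z \<in> S \<Longrightarrow> F z = F' z"
  shows "vec_zero_order k F z0 = vec_zero_order k F' z0"
proof -
  have "(deriv ^^ m) (\<lambda>z. F z $ i) z0 = (deriv ^^ m) (\<lambda>z. F' z $ i) z0" for m i
    by (rule higher_deriv_cong_ev[OF _ refl]) (use S eq in \<open>auto simp: eventually_nhds\<close>)
  thus ?thesis unfolding vec_zero_order_def by simp
qed

lemma pp_eqI:
  assumes "open U" "z0 \<in> U" "hol_mat U nr nc H"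
    and "\<And>z. z \<in> U \<Longrightarrow> z \<noteq> z0 \<Longrightarrow> M1 z \<in> carrier_mat nr nc"
    and "\<And>z. z \<in> U \<Longrightarrow> z \<noteq> z0 \<Longrightarrow> M2 z \<in> carrier_mat nr nc"
    and "\<And>z. z \<in> U \<Longrightarrow> z \<noteq> z0 \<Longrightarrow> M2 z - M1 z = H z"
  shows "pp_eq nr nc z0 M1 M2"
  unfolding pp_eq_def using assms by blast

lemma pp_eq_if_eq_near:
  assumes "open U" "z0 \<in> U"
    and "\<And>z. z \<in> U \<Longrightarrow> z \<noteq> z0 \<Longrightarrow> M1 z = M2 z"
    and "\<And>z. z \<in> U \<Longrightarrow> z \<noteq> z0 \<Longrightarrow> M2 z \<in> carrier_mat nr nc"
  shows "pp_eq nr nc z0 M1 M2"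
  by (rule pp_eqI[OF assms(1,2) hol_mat_const[OF zero_carrier_mat]]) (use assms(3,4) in auto)

section \<open>Local Smith form and canonical matrices\<close>

locale local_smith_form =
  fixes U :: "complex set" and n r :: nat and T UL UR :: "complex \<Rightarrow> complex mat"
    and ms :: "nat list" and z0 :: complex
  assumes U: "open U" "z0 \<in> U"
    and T: "hol_mat U n n T" and UL: "hol_mat U n n UL" and UR: "hol_mat U n n UR"
    and dUL: "\<And>z. z \<in> U \<Longrightarrow> det (UL z) \<noteq> 0" and dUR: "\<And>z. z \<in> U \<Longrightarrow> det (UR z) \<noteq> 0"
    and sm: "\<And>z. z \<in> U \<Longrightarrow> UL z * T z * UR z = chi_diag n ms z0 z"
    and len: "length ms = n" and sorted: "\<And>i j. i \<le> j \<Longrightarrow> j < n \<Longrightarrow> ms!j \<le> ms!i"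
    and rn: "r \<le> n" and zero: "\<And>i. r \<le> i \<Longrightarrow> i < n \<Longrightarrow> ms!i = 0"
begin

abbreviation "D \<equiv> chi_diag n ms z0"
definition "UR_inv z = minv (UR z)"

lemma Tc: "z \<in> U \<Longrightarrow> T z \<in> carrier_mat n n" using hol_matD(1)[OF T] .
lemma ULc: "z \<in> U \<Longrightarrow> UL z \<in> carrier_mat n n" using hol_matD(1)[OF UL] .
lemma URc: "z \<in> U \<Longrightarrow> UR z \<in> carrier_mat n n" using hol_matD(1)[OF UR] .

lemma hol_UR_inv: "hol_mat U n n UR_inv" unfolding UR_inv_def by (rule hol_minv[OF UR dUR])
lemma UR_inv_carrier: "z \<in> U \<Longrightarrow> UR_inv z \<in> carrier_mat n n" using hol_matD(1)[OF hol_UR_inv] .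
lemma UR_UR_inv: "z \<in> U \<Longrightarrow> UR z * UR_inv z = 1\<^sub>m n" unfolding UR_inv_def using minv_inverse[OF URc dUR] by auto
lemma UR_inv_UR: "z \<in> U \<Longrightarrow> UR_inv z * UR z = 1\<^sub>m n" unfolding UR_inv_def using minv_inverse[OF URc dUR] by auto

lemma UL_T: assumes z: "z \<in> U" shows "UL z * T z = D z * UR_inv z"
proof -
  have "UL z * T z = UL z * T z * (UR z * UR_inv z)" using UR_UR_inv[OF z] ULc[OF z] Tc[OF z] by simp
  also have "\<dots> = (UL z * T z * UR z) * UR_inv z"
    using ULc[OF z] Tc[OF z] URc[OF z] UR_inv_carrier[OF z] by (simp add: assoc_mult_mat[of _ n n _ n _ n])
  finally show ?thesis using sm[OF z] by simp
qed

lemma det_smith: assumes z: "z \<in> U" shows "det (UL z) * det (T z) * det (UR z) = det (D z)"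
  using sm[OF z] ULc[OF z] Tc[OF z] URc[OF z] by (metis det_mult mult_carrier_mat)

text \<open>As \<open>UL T = D UR\<^sup>-\<^sup>1\<close>, the \<open>i\<close>-th coordinate of \<open>UR\<^sup>-\<^sup>1 y\<close> carries the factor
  \<open>(z - z0)\<^sup>p\<^sup>-\<^sup>m\<^sub>i\<close>.\<close>
lemma UR_inv_coord_vanishes:
  assumes y: "hol_vec U n y" and h: "hol_vec U n h"
    and eq: "\<And>z. z \<in> U \<Longrightarrow> T z *\<^sub>v y z = (z - z0)^p \<cdot>\<^sub>v h z"
    and i: "i < n" and ip: "ms!i < p"
  shows "(UR_inv z0 *\<^sub>v y z0) $ i = 0"
proof -
  have key: "(z - z0)^(ms!i) * (UR_inv z *\<^sub>v y z) $ i = (z - z0)^p * (UL z *\<^sub>v h z) $ i" if z: "z \<in> U" for z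
  proof -
    have yc: "y z \<in> carrier_vec n" and hc: "h z \<in> carrier_vec n" using hol_vecD(1) y h z by auto
    have "UL z *\<^sub>v (T z *\<^sub>v y z) = (UL z * T z) *\<^sub>v y z" using ULc[OF z] Tc[OF z] yc by simp
    also have "\<dots> = D z *\<^sub>v (UR_inv z *\<^sub>v y z)" unfolding UL_T[OF z] using assoc_mult_mat_vec[OF chi_diag_carrier UR_inv_carrier[OF z] yc] .
    finally have smith_side: "UL z *\<^sub>v (T z *\<^sub>v y z) = D z *\<^sub>v (UR_inv z *\<^sub>v y z)" .
    have factor_side: "UL z *\<^sub>v (T z *\<^sub>v y z) = (z - z0)^p \<cdot>\<^sub>v (UL z *\<^sub>v h z)"
      unfolding eq[OF z] using mult_mat_vec[OF ULc[OF z] hc] .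
    have "(D z *\<^sub>v (UR_inv z *\<^sub>v y z)) $ i = (z - z0)^(ms!i) * (UR_inv z *\<^sub>v y z) $ i"
      by (rule chi_diag_mult_vec) (use UR_inv_carrier[OF z] yc i in auto)
    moreover have "((z - z0)^p \<cdot>\<^sub>v (UL z *\<^sub>v h z)) $ i = (z - z0)^p * (UL z *\<^sub>v h z) $ i"
      using ULc[OF z] i by simp
    ultimately show ?thesis using smith_side factor_side by metis
  qed
  have "(UR_inv z0 *\<^sub>v y z0) $ i = (z0 - z0)^(p - ms!i) * (UL z0 *\<^sub>v h z0) $ i"
  proof (rule holomorphic_eq_at_point[OF U, where f = "\<lambda>z. (UR_inv z *\<^sub>v y z) $ i"
        and g = "\<lambda>z. (z - z0)^(p - ms!i) * (UL z *\<^sub>v h z) $ i"])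
    show "(\<lambda>z. (UR_inv z *\<^sub>v y z) $ i) holomorphic_on U" using hol_vecD(2)[OF hol_mat_mult_vec[OF hol_UR_inv y] i] .
    show "(\<lambda>z. (z - z0)^(p - ms!i) * (UL z *\<^sub>v h z) $ i) holomorphic_on U"
      using hol_vecD(2)[OF hol_mat_mult_vec[OF UL h] i] by (intro holomorphic_intros)
  next
    fix z assume z: "z \<in> U" "z \<noteq> z0"
    have "(z - z0)^p = (z - z0)^(ms!i) * (z - z0)^(p - ms!i)" using ip by (simp add: power_add[symmetric])
    with key[OF z(1)] z(2) show "(UR_inv z *\<^sub>v y z) $ i = (z - z0)^(p - ms!i) * (UL z *\<^sub>v h z) $ i" by simp
  qed
  thus ?thesis using ip by simp
qed

end

locale smith_right_canonical = local_smith_form +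
  fixes Y :: "complex \<Rightarrow> complex mat"
  assumes Y: "hol_mat U n r Y"
    and Ynz: "\<And>j. j < r \<Longrightarrow> col (Y z0) j \<noteq> 0\<^sub>v n"
    and Yroot: "\<And>j. j < r \<Longrightarrow> T z0 *\<^sub>v col (Y z0) j = 0\<^sub>v n"
    and Yind: "\<And>c. c \<in> carrier_vec r \<Longrightarrow> Y z0 *\<^sub>v c = 0\<^sub>v n \<Longrightarrow> c = 0\<^sub>v r"
    and Ysum: "(\<Sum>j<r. root_mult n T z0 (\<lambda>z. col (Y z) j)) = (\<Sum>j<r. ms ! j)"
    and Ysort: "\<And>i j. i \<le> j \<Longrightarrow> j < r \<Longrightarrow> root_mult n T z0 (\<lambda>z. col (Y z) j) \<le> root_mult n T z0 (\<lambda>z. col (Y z) i)"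
begin

abbreviation "nu j \<equiv> root_mult n T z0 (\<lambda>z. col (Y z) j)"

lemma Yc: "z \<in> U \<Longrightarrow> Y z \<in> carrier_mat n r" using hol_matD(1)[OF Y] .

lemma hol_T_Y_col: "j < r \<Longrightarrow> hol_vec U n (\<lambda>z. T z *\<^sub>v col (Y z) j)"
  by (rule hol_mat_mult_vec[OF T hol_mat_col[OF Y]])

lemma UR_inv_Y_inj: assumes c: "c \<in> carrier_vec r" and h: "(UR_inv z0 * Y z0) *\<^sub>v c = 0\<^sub>v n" shows "c = 0\<^sub>v r"
proof -
  have "Y z0 *\<^sub>v c = (UR z0 * UR_inv z0) *\<^sub>v (Y z0 *\<^sub>v c)" using UR_UR_inv[OF U(2)] Yc[OF U(2)] c by simp
  also have "\<dots> = UR z0 *\<^sub>v ((UR_inv z0 * Y z0) *\<^sub>v c)"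
    using URc[OF U(2)] UR_inv_carrier[OF U(2)] Yc[OF U(2)] c by simp
  also have "\<dots> = 0\<^sub>v n" unfolding h using URc[OF U(2)] by simp
  finally show ?thesis using Yind c by blast
qed

lemma T_Y_col_not_flat: assumes j: "j < r"
  shows "\<exists>m. \<exists>i<n. (deriv ^^ m) (\<lambda>z. (T z *\<^sub>v col (Y z) j) $ i) z0 \<noteq> 0"
proof (rule ccontr)
  assume "\<not> ?thesis"
  hence d: "\<And>i m. i < n \<Longrightarrow> m < Suc (ms!0) \<Longrightarrow> (deriv ^^ m) (\<lambda>z. (T z *\<^sub>v col (Y z) j) $ i) z0 = 0" by auto
  from vec_power_factor_of_vanishing_derivs[OF hol_T_Y_col[OF j] U d] obtain h where h: "hol_vec U n h"
    and eq: "\<forall>z\<in>U. T z *\<^sub>v col (Y z) j = (z - z0)^Suc (ms!0) \<cdot>\<^sub>v h z" by blast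
  have "UR_inv z0 *\<^sub>v col (Y z0) j = 0\<^sub>v n"
  proof (rule eq_vecI)
    fix i assume "i < dim_vec (0\<^sub>v n :: complex vec)" hence i: "i < n" by simp
    have "ms!i < Suc (ms!0)" using sorted[of 0 i] i by simp
    from UR_inv_coord_vanishes[OF hol_mat_col[OF Y j] h _ i this] eq
    show "(UR_inv z0 *\<^sub>v col (Y z0) j) $ i = 0\<^sub>v n $ i" using i by auto
  qed (use UR_inv_carrier[OF U(2)] in auto)
  note z = this
  have cy: "col (Y z0) j \<in> carrier_vec n" using Yc[OF U(2)] by (rule col_carrier_vec[OF j])
  have "col (Y z0) j = (UR z0 * UR_inv z0) *\<^sub>v col (Y z0) j"
    using UR_UR_inv[OF U(2)] cy by simp
  also have "\<dots> = UR z0 *\<^sub>v (UR_inv z0 *\<^sub>v col (Y z0) j)"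
    using URc[OF U(2)] UR_inv_carrier[OF U(2)] cy by simp
  also have "\<dots> = 0\<^sub>v n" unfolding z using URc[OF U(2)] by simp
  finally have "col (Y z0) j = 0\<^sub>v n" .
  thus False using Ynz[OF j] by simp
qed


lemma derivs_below_root_mult: assumes j: "j < r" and m: "m < nu j" and i: "i < n"
  shows "(deriv ^^ m) (\<lambda>z. (T z *\<^sub>v col (Y z) j) $ i) z0 = 0"
  using not_less_Least[OF m[unfolded root_mult_def vec_zero_order_def]] i by auto

lemma index_UR_inv_Y: "i < n \<Longrightarrow> j < r \<Longrightarrow> (UR_inv z0 * Y z0) $$ (i,j) = (UR_inv z0 *\<^sub>v col (Y z0) j) $ i"
  using UR_inv_carrier[OF U(2)] Yc[OF U(2)] by simp

text \<open>If \<open>\<nu>\<^sub>j > m\<^sub>j\<close>, then by monotonicity the coordinates \<open>i \<ge> j\<close> of \<open>UR\<^sup>-\<^sup>1 y\<^sub>k\<close>, \<open>k \<le> j\<close>,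
  vanish at \<open>z0\<close>, contradicting the linear independence of the \<open>y\<^sub>k(z0)\<close>.\<close>
lemma root_mult_le_partial_mult: assumes j: "j < r" shows "nu j \<le> ms!j"
proof (rule ccontr)
  assume "\<not> nu j \<le> ms!j"
  hence p: "ms!j < nu j" by simp
  have ze: "(UR_inv z0 * Y z0) $$ (i,k) = 0" if ik: "j \<le> i" "i < n" "k \<le> j" for i k
  proof -
    have k: "k < r" using ik j by simp
    have "nu j \<le> nu k" using Ysort[OF ik(3) j] .
    hence d: "(deriv ^^ m) (\<lambda>z. (T z *\<^sub>v col (Y z) k) $ i') z0 = 0" if "i' < n" "m < nu j" for i' m
      using derivs_below_root_mult[OF k _ that(1)] that(2) by simp
    from vec_power_factor_of_vanishing_derivs[OF hol_T_Y_col[OF k] U d] obtain h where h: "hol_vec U n h"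
      and eq: "\<forall>z\<in>U. T z *\<^sub>v col (Y z) k = (z - z0)^(nu j) \<cdot>\<^sub>v h z" by blast
    have "ms!i \<le> ms!j" using sorted[OF ik(1)] ik(2) by simp
    hence "ms!i < nu j" using p by simp
    from UR_inv_coord_vanishes[OF hol_mat_col[OF Y k] h _ ik(2) this] eq
    have "(UR_inv z0 *\<^sub>v col (Y z0) k) $ i = 0" by auto
    thus ?thesis using index_UR_inv_Y[OF ik(2) k] by simp
  qed
  show False
    by (rule injective_mat_no_zero_corner[OF mult_carrier_mat[OF UR_inv_carrier[OF U(2)] Yc[OF U(2)]] j rn ze UR_inv_Y_inj]) auto
qed

lemma root_mult_eq_partial_mult: assumes j: "j < r" shows "nu j = ms!j"
  by (rule sum_mono_inv[OF Ysum]) (use root_mult_le_partial_mult j in auto)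

lemma T_Y_factor: "\<exists>G. hol_mat U n r G \<and> (\<forall>z\<in>U. T z * Y z = G z * chi_diag r ms z0 z)"
proof -
  have "\<forall>j\<in>{..<r}. \<exists>g. hol_vec U n g \<and> (\<forall>z\<in>U. T z *\<^sub>v col (Y z) j = (z - z0)^(ms!j) \<cdot>\<^sub>v g z)"
  proof
    fix j assume "j \<in> {..<r}" hence j: "j < r" by simp
    from vec_zero_order_factor[OF hol_T_Y_col[OF j] U T_Y_col_not_flat[OF j]]
    show "\<exists>g. hol_vec U n g \<and> (\<forall>z\<in>U. T z *\<^sub>v col (Y z) j = (z - z0)^(ms!j) \<cdot>\<^sub>v g z)"
      using root_mult_eq_partial_mult[OF j] unfolding root_mult_def by auto
  qed
  then obtain g where g: "\<And>j. j < r \<Longrightarrow> hol_vec U n (g j) \<and> (\<forall>z\<in>U. T z *\<^sub>v col (Y z) j = (z - z0)^(ms!j) \<cdot>\<^sub>v g j z)"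
    by (metis lessThan_iff bchoice)
  define G where "G = (\<lambda>z. mat n r (\<lambda>(i,j). g j z $ i))"
  have "hol_mat U n r G" unfolding G_def by (rule hol_mat_mat) (use g hol_vecD(2) in blast)
  moreover have "T z * Y z = G z * chi_diag r ms z0 z" if z: "z \<in> U" for z
  proof (rule eq_matI)
    fix i j assume "i < dim_row (G z * chi_diag r ms z0 z)" "j < dim_col (G z * chi_diag r ms z0 z)"
    hence ij: "i < n" "j < r" unfolding G_def by auto
    have gc: "g j z \<in> carrier_vec n" using hol_vecD(1) g[OF ij(2)] z by blast
    have "(T z * Y z) $$ (i,j) = (T z *\<^sub>v col (Y z) j) $ i" using Tc[OF z] Yc[OF z] ij by simp
    also have "\<dots> = (z - z0)^(ms!j) * g j z $ i" using g[OF ij(2)] z ij gc by simp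
    also have "\<dots> = (G z * chi_diag r ms z0 z) $$ (i,j)"
      by (subst mult_chi_diag_right[of _ n]) (use ij in \<open>auto simp: G_def\<close>)
    finally show "(T z * Y z) $$ (i,j) = (G z * chi_diag r ms z0 z) $$ (i,j)" .
  qed (use Tc[OF z] Yc[OF z] in \<open>auto simp: G_def\<close>)
  ultimately show ?thesis by blast
qed


lemma UR_inv_Y_lower_zero: assumes i: "r \<le> i" "i < n" and j: "j < r" shows "(UR_inv z0 * Y z0) $$ (i,j) = 0"
proof -
  have cy: "col (Y z0) j \<in> carrier_vec n" using Yc[OF U(2)] by (rule col_carrier_vec[OF j])
  have "D z0 *\<^sub>v (UR_inv z0 *\<^sub>v col (Y z0) j) = (D z0 * UR_inv z0) *\<^sub>v col (Y z0) j"
    using assoc_mult_mat_vec[OF chi_diag_carrier UR_inv_carrier[OF U(2)] cy] by simp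
  also have "\<dots> = (UL z0 * T z0) *\<^sub>v col (Y z0) j" unfolding UL_T[OF U(2)] ..
  also have "\<dots> = UL z0 *\<^sub>v (T z0 *\<^sub>v col (Y z0) j)" using ULc[OF U(2)] Tc[OF U(2)] cy by simp
  also have "\<dots> = 0\<^sub>v n" unfolding Yroot[OF j] using ULc[OF U(2)] by simp
  finally have "(D z0 *\<^sub>v (UR_inv z0 *\<^sub>v col (Y z0) j)) $ i = 0" using i by simp
  moreover have "(D z0 *\<^sub>v (UR_inv z0 *\<^sub>v col (Y z0) j)) $ i = (UR_inv z0 *\<^sub>v col (Y z0) j) $ i"
    by (subst chi_diag_mult_vec) (use UR_inv_carrier[OF U(2)] cy i zero[OF i] in auto)
  ultimately show ?thesis using index_UR_inv_Y[OF i(2) j] by simp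
qed

definition "Yf z = mat n n (\<lambda>(i,j). if j < r then Y z $$ (i,j) else UR z $$ (i,j))"

lemma hol_Yf: "hol_mat U n n Yf"
  unfolding Yf_def
proof (rule hol_mat_mat)
  fix i j assume "i < n" "j < n"
  thus "(\<lambda>z. if j < r then Y z $$ (i, j) else UR z $$ (i, j)) holomorphic_on U"
    using hol_matD(2)[OF Y] hol_matD(2)[OF UR] by (cases "j < r") auto
qed

lemma Yfc: "z \<in> U \<Longrightarrow> Yf z \<in> carrier_mat n n" using hol_matD(1)[OF hol_Yf] .

lemma Yf_col: assumes z: "z \<in> U" and j: "j < r" shows "col (Yf z) j = col (Y z) j"
  by (rule eq_vecI) (use Yc[OF z] j rn in \<open>auto simp: Yf_def\<close>)

lemma Yf_col2: assumes z: "z \<in> U" and j: "r \<le> j" "j < n" shows "col (Yf z) j = col (UR z) j"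
  by (rule eq_vecI) (use URc[OF z] j in \<open>auto simp: Yf_def\<close>)

lemma UR_inv_Yf: "UR_inv z0 * Yf z0 = mat n n (\<lambda>(i,j). if j < r then (UR_inv z0 * Y z0) $$ (i,j) else (if i = j then 1 else 0))"
proof (rule eq_matI)
  fix i j assume "i < dim_row (mat n n (\<lambda>(i,j). if j < r then (UR_inv z0 * Y z0) $$ (i,j) else (if i = j then 1 else 0)) :: complex mat)"
    "j < dim_col (mat n n (\<lambda>(i,j). if j < r then (UR_inv z0 * Y z0) $$ (i,j) else (if i = j then 1 else 0)) :: complex mat)"
  hence ij: "i < n" "j < n" by auto
  have "(UR_inv z0 * Yf z0) $$ (i,j) = row (UR_inv z0) i \<bullet> col (Yf z0) j" using UR_inv_carrier[OF U(2)] Yfc[OF U(2)] ij by simp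
  also have "\<dots> = (if j < r then (UR_inv z0 * Y z0) $$ (i,j) else (if i = j then 1 else 0))"
  proof (cases "j < r")
    case True thus ?thesis using Yf_col[OF U(2) True] UR_inv_carrier[OF U(2)] Yc[OF U(2)] ij by simp
  next
    case False
    hence "row (UR_inv z0) i \<bullet> col (Yf z0) j = (UR_inv z0 * UR z0) $$ (i,j)"
      using Yf_col2[OF U(2)] UR_inv_carrier[OF U(2)] URc[OF U(2)] ij by simp
    thus ?thesis using False UR_inv_UR[OF U(2)] ij by simp
  qed
  finally show "(UR_inv z0 * Yf z0) $$ (i,j) = mat n n (\<lambda>(i,j). if j < r then (UR_inv z0 * Y z0) $$ (i,j) else (if i = j then 1 else 0)) $$ (i,j)"
    using ij by simp
qed (use UR_inv_carrier[OF U(2)] Yfc[OF U(2)] in auto)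

lemma det_Yf: "det (Yf z0) \<noteq> 0"
proof
  assume "det (Yf z0) = 0"
  then obtain c where c: "c \<in> carrier_vec n" "c \<noteq> 0\<^sub>v n" "Yf z0 *\<^sub>v c = 0\<^sub>v n"
    using det_0_iff_vec_prod_zero[OF Yfc[OF U(2)]] by auto
  define M where "M = UR_inv z0 * Y z0"
  have Mc: "M \<in> carrier_mat n r" unfolding M_def using UR_inv_carrier[OF U(2)] Yc[OF U(2)] by simp
  define Z where "Z = mat n n (\<lambda>(i,j). if j < r then M $$ (i,j) else (if i = j then 1 else (0::complex)))"
  have Zc: "Z *\<^sub>v c = 0\<^sub>v n"
  proof -
    have "Z *\<^sub>v c = (UR_inv z0 * Yf z0) *\<^sub>v c" unfolding Z_def UR_inv_Yf M_def ..
    also have "\<dots> = UR_inv z0 *\<^sub>v (Yf z0 *\<^sub>v c)" using UR_inv_carrier[OF U(2)] Yfc[OF U(2)] c(1) by simp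
    also have "\<dots> = 0\<^sub>v n" unfolding c(3) using UR_inv_carrier[OF U(2)] by simp
    finally show ?thesis .
  qed
  have Zrow: "(Z *\<^sub>v c) $ i = (\<Sum>j\<in>{0..<n}. Z $$ (i,j) * c $ j)" if "i < n" for i
    using that c(1) by (auto simp: Z_def scalar_prod_def intro!: sum.cong)
  have chigh: "c $ i = 0" if i: "r \<le> i" "i < n" for i
  proof -
    have "(\<Sum>j\<in>{0..<n}. Z $$ (i,j) * c $ j) = (\<Sum>j\<in>{0..<n}. if j = i then c $ i else 0)"
      by (rule sum.cong) (use i UR_inv_Y_lower_zero[OF i, folded M_def] in \<open>auto simp: Z_def\<close>)
    also have "\<dots> = c $ i" using i by simp
    finally show ?thesis using Zrow[OF i(2)] Zc i by simp
  qed
  define c' where "c' = vec r (\<lambda>j. c $ j)"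
  have "M *\<^sub>v c' = 0\<^sub>v n"
  proof (rule eq_vecI)
    fix i assume "i < dim_vec (0\<^sub>v n :: complex vec)" hence i: "i < n" by simp
    have "(M *\<^sub>v c') $ i = (\<Sum>j\<in>{0..<r}. M $$ (i,j) * c $ j)"
      using i Mc by (auto simp: c'_def scalar_prod_def intro!: sum.cong)
    also have "\<dots> = (\<Sum>j\<in>{0..<n}. Z $$ (i,j) * c $ j)"
      by (rule sum.mono_neutral_cong_left) (use rn i chigh in \<open>auto simp: Z_def\<close>)
    also have "\<dots> = 0" using Zrow[OF i] Zc i by simp
    finally show "(M *\<^sub>v c') $ i = 0\<^sub>v n $ i" using i by simp
  qed (use Mc in auto)
  hence "c' = 0\<^sub>v r" using UR_inv_Y_inj unfolding M_def by (auto simp: c'_def)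
  hence "c $ j = 0" if "j < r" for j using that unfolding c'_def by (metis dim_vec index_vec index_zero_vec(1))
  with chigh have "c = 0\<^sub>v n" using c(1) by (intro eq_vecI) (auto, metis not_le)
  thus False using c(2) by simp
qed


text \<open>Since \<open>m\<^sub>j = 0\<close> for \<open>j \<ge> r\<close>, the last columns of \<open>D\<close> are unit columns, whence \<open>T Yf = Bf D\<close>.\<close>
definition "Bf G z = mat n n (\<lambda>(i,j). if j < r then G z $$ (i,j) else (T z * Yf z) $$ (i,j))"

context
  fixes G assumes G: "hol_mat U n r G"
    and TYG: "\<And>z. z \<in> U \<Longrightarrow> T z * Y z = G z * chi_diag r ms z0 z"
begin

lemma Gc: "z \<in> U \<Longrightarrow> G z \<in> carrier_mat n r" using hol_matD(1)[OF G] .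

lemma hol_Bf: "hol_mat U n n (Bf G)"
  unfolding Bf_def
proof (rule hol_mat_mat)
  fix i j assume ij: "i < n" "j < n"
  have "(\<lambda>z. (T z * Yf z) $$ (i, j)) holomorphic_on U" using hol_matD(2)[OF hol_mat_mult[OF T hol_Yf] ij] .
  thus "(\<lambda>z. if j < r then G z $$ (i, j) else (T z * Yf z) $$ (i, j)) holomorphic_on U"
    using hol_matD(2)[OF G] ij by (cases "j < r") auto
qed

lemma Bfc: "z \<in> U \<Longrightarrow> Bf G z \<in> carrier_mat n n" using hol_matD(1)[OF hol_Bf] .

lemma TYf: assumes z: "z \<in> U" shows "T z * Yf z = Bf G z * D z"
proof (rule eq_matI)
  fix i j assume "i < dim_row (Bf G z * D z)" "j < dim_col (Bf G z * D z)"
  hence ij: "i < n" "j < n" by (auto simp: Bf_def)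
  have "(Bf G z * D z) $$ (i,j) = Bf G z $$ (i,j) * (z - z0)^(ms!j)"
    by (rule mult_chi_diag_right[OF Bfc[OF z] ij])
  also have "\<dots> = (T z * Yf z) $$ (i,j)"
  proof (cases "j < r")
    case True
    have "(T z * Yf z) $$ (i,j) = row (T z) i \<bullet> col (Yf z) j" using Tc[OF z] Yfc[OF z] ij by simp
    also have "\<dots> = (T z * Y z) $$ (i,j)" using Yf_col[OF z True] Tc[OF z] Yc[OF z] ij True by simp
    also have "\<dots> = (G z * chi_diag r ms z0 z) $$ (i,j)" unfolding TYG[OF z] ..
    also have "\<dots> = G z $$ (i,j) * (z - z0)^(ms!j)" by (rule mult_chi_diag_right[OF Gc[OF z] ij(1) True])
    finally show ?thesis using True ij by (simp add: Bf_def)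
  next
    case False thus ?thesis using zero[of j] ij by (simp add: Bf_def)
  qed
  finally show "(T z * Yf z) $$ (i,j) = (Bf G z * D z) $$ (i,j)" ..
qed (use Tc[OF z] Yfc[OF z] in \<open>auto simp: Bf_def\<close>)

lemma det_Bf: "det (Bf G z0) \<noteq> 0"
proof -
  have eq: "det (Bf G z) * det (UL z) * det (UR z) = det (Yf z)" if z: "z \<in> U" "z \<noteq> z0" for z
  proof -
    have "det (T z) * det (Yf z) = det (Bf G z) * det (D z)"
      using TYf[OF z(1)] det_mult[OF Tc[OF z(1)] Yfc[OF z(1)]] det_mult[OF Bfc[OF z(1)] chi_diag_carrier] by simp
    hence "det (UL z) * det (T z) * det (UR z) * det (Yf z) = det (Bf G z) * det (UL z) * det (UR z) * det (D z)"
      by (simp add: algebra_simps)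
    hence "det (D z) * det (Yf z) = det (Bf G z) * det (UL z) * det (UR z) * det (D z)" using det_smith[OF z(1)] by simp
    thus ?thesis using chi_diag_inv(4)[OF z(2), of n ms] by simp
  qed
  have "det (Bf G z0) * det (UL z0) * det (UR z0) = det (Yf z0)"
    by (rule holomorphic_eq_at_point[OF U, of "\<lambda>z. det (Bf G z) * det (UL z) * det (UR z)" "\<lambda>z. det (Yf z)"])
      (use hol_det[OF hol_Bf] hol_det[OF UL] hol_det[OF UR] hol_det[OF hol_Yf] eq in \<open>auto intro!: holomorphic_intros\<close>)
  thus ?thesis using det_Yf by auto
qed

lemma col_left_kernel_mult_Bf:
  assumes V0: "V0 \<in> carrier_mat r n" and VT: "V0 * T z0 = 0\<^sub>m r n" and j: "j < n"
  shows "col (V0 * Bf G z0) j = (if j < r then col (V0 * G z0) j else 0\<^sub>v r)"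
proof -
  have "col (V0 * Bf G z0) j = V0 *\<^sub>v col (Bf G z0) j" by (rule col_mult2[OF V0 Bfc[OF U(2)] j])
  also have "col (Bf G z0) j = (if j < r then col (G z0) j else T z0 *\<^sub>v col (Yf z0) j)"
    by (rule eq_vecI) (use j Gc[OF U(2)] Tc[OF U(2)] Yfc[OF U(2)] in \<open>auto simp: Bf_def\<close>)
  finally show ?thesis
    using col_mult2[OF V0 Gc[OF U(2)], of j] assoc_mult_mat_vec[OF V0 Tc[OF U(2)] col_carrier_vec[OF j Yfc[OF U(2)]]]
      col_carrier_vec[OF j Yfc[OF U(2)]] by (simp add: VT split: if_splits)
qed

text \<open>If the rows of \<open>V0\<close> form a basis of the left kernel of \<open>T(z0)\<close>, then \<open>V0 * Bf\<close> is
  \<open>[V0 G | 0]\<close> at \<open>z0\<close>, so a left null vector of \<open>V0 G\<close> would give one of the unimodular \<open>Bf\<close>.\<close>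
lemma det_left_kernel_mult_G:
  assumes V0: "V0 \<in> carrier_mat r n"
    and V0root: "\<And>j. j < r \<Longrightarrow> transpose_mat (T z0) *\<^sub>v col (transpose_mat V0) j = 0\<^sub>v n"
    and rowind: "\<And>c. c \<in> carrier_vec r \<Longrightarrow> transpose_mat V0 *\<^sub>v c = 0\<^sub>v n \<Longrightarrow> c = 0\<^sub>v r"
  shows "det (V0 * G z0) \<noteq> 0"
proof
  have "transpose_mat (T z0) * transpose_mat V0 = 0\<^sub>m n r"
    by (rule mult_eq_zero_if_cols_zero[OF _ _ V0root]) (use Tc[OF U(2)] V0 in auto)
  hence VT: "V0 * T z0 = 0\<^sub>m r n"
    using arg_cong[OF transpose_mult[OF V0 Tc[OF U(2)]], of transpose_mat] by simp
  have VGc: "V0 * G z0 \<in> carrier_mat r r" using V0 Gc[OF U(2)] by simp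
  assume "det (V0 * G z0) = 0"
  hence "det (transpose_mat (V0 * G z0)) = 0" using det_transpose[OF VGc] by simp
  then obtain d where d: "d \<in> carrier_vec r" "d \<noteq> 0\<^sub>v r" "transpose_mat (V0 * G z0) *\<^sub>v d = 0\<^sub>v r"
    using det_0_iff_vec_prod_zero[of "transpose_mat (V0 * G z0)" r] VGc by auto
  define w where "w = transpose_mat V0 *\<^sub>v d"
  have wc: "w \<in> carrier_vec n" unfolding w_def using V0 d(1) by simp
  have wnz: "w \<noteq> 0\<^sub>v n" using rowind[OF d(1)] d(2) unfolding w_def by blast
  have "transpose_mat (Bf G z0) *\<^sub>v w = transpose_mat (V0 * Bf G z0) *\<^sub>v d"
    unfolding w_def transpose_mult[OF V0 Bfc[OF U(2)]]
    by (rule assoc_mult_mat_vec[symmetric]) (use Bfc[OF U(2)] V0 d(1) in auto)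
  also have "\<dots> = 0\<^sub>v n"
  proof (rule eq_vecI)
    fix j assume "j < dim_vec (0\<^sub>v n :: complex vec)" hence j: "j < n" by simp
    have "(transpose_mat (V0 * Bf G z0) *\<^sub>v d) $ j = col (V0 * Bf G z0) j \<bullet> d"
      using j V0 Bfc[OF U(2)] by simp
    also have "\<dots> = 0"
    proof (cases "j < r")
      case True
      have "col (V0 * G z0) j \<bullet> d = (transpose_mat (V0 * G z0) *\<^sub>v d) $ j"
        using True carrier_matD[OF VGc] by simp
      thus ?thesis using col_left_kernel_mult_Bf[OF V0 VT j] True d(3) by simp
    next
      case False thus ?thesis using col_left_kernel_mult_Bf[OF V0 VT j] d(1) by simp
    qed
    finally show "(transpose_mat (V0 * Bf G z0) *\<^sub>v d) $ j = 0\<^sub>v n $ j" using j by simp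
  qed (use Bfc[OF U(2)] in auto)
  finally have "det (transpose_mat (Bf G z0)) = 0"
    using det_0_iff_vec_prod_zero[of "transpose_mat (Bf G z0)" n] Bfc[OF U(2)] wc wnz by auto
  thus False using det_Bf det_transpose[OF Bfc[OF U(2)]] by simp
qed

end

end

text \<open>\<open>right_canonical\<close> with the number \<open>r\<close> of columns as a parameter, so that a left canonical
  matrix for \<open>T\<close> can be read as a right canonical matrix for \<open>T\<^sup>T\<close> with \<open>r = kernel_dim (T z0)\<close>.\<close>
definition right_canonical_dim :: "complex set \<Rightarrow> nat \<Rightarrow> nat \<Rightarrow> (complex \<Rightarrow> complex mat) \<Rightarrow> complex \<Rightarrow> nat list \<Rightarrow> (complex \<Rightarrow> complex mat) \<Rightarrow> bool" where
  "right_canonical_dim \<Omega> n r T z0 ms Y \<longleftrightarrow>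
     (let nu = (\<lambda>i. root_mult n T z0 (\<lambda>z. col (Y z) i)) in
       hol_mat \<Omega> n r Y \<and>
       (\<forall>i<r. root_fun \<Omega> n T z0 (\<lambda>z. col (Y z) i)) \<and>
       (\<forall>c\<in>carrier_vec r. Y z0 *\<^sub>v c = 0\<^sub>v n \<longrightarrow> c = 0\<^sub>v r) \<and>
       (\<Sum>i<r. nu i) = (\<Sum>i<r. ms ! i) \<and>
       (\<forall>i j. i \<le> j \<longrightarrow> j < r \<longrightarrow> nu j \<le> nu i))"

lemma right_canonical_eq_dim: "right_canonical \<Omega> n T z0 ms Y = right_canonical_dim \<Omega> n (kernel_dim (T z0)) T z0 ms Y"
  unfolding right_canonical_def right_canonical_dim_def Let_def ..


lemma left_root_mult_eq_transpose:
  assumes S: "open S" "z0 \<in> S" and Vc: "\<And>z. z \<in> S \<Longrightarrow> V z \<in> carrier_mat r n" and i: "i < r"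
  shows "left_root_mult n T z0 (\<lambda>z. row (V z) i) = root_mult n (\<lambda>z. transpose_mat (T z)) z0 (\<lambda>z. col (transpose_mat (V z)) i)"
  unfolding left_root_mult_def root_mult_def
proof (rule vec_zero_order_cong[OF S])
  fix z assume z: "z \<in> S"
  have "col (transpose_mat (V z)) i = row (V z) i" using Vc[OF z] i by simp
  thus "transpose_mat (T z) *\<^sub>v row (V z) i = transpose_mat (T z) *\<^sub>v col (transpose_mat (V z)) i" by simp
qed

lemma left_canonical_transpose:
  assumes S: "open S" "z0 \<in> S" and L: "left_canonical S n T z0 ms V" and r: "r = kernel_dim (T z0)"
  shows "right_canonical_dim S n r (\<lambda>z. transpose_mat (T z)) z0 ms (\<lambda>z. transpose_mat (V z))"
proof -
  note L = L[unfolded left_canonical_def Let_def, folded r]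
  have hV: "hol_mat S r n V" using L by blast
  have Vc: "\<And>z. z \<in> S \<Longrightarrow> V z \<in> carrier_mat r n" using hol_matD(1)[OF hV] .
  have cong: "\<And>i. i < r \<Longrightarrow> left_root_mult n T z0 (\<lambda>z. row (V z) i) = root_mult n (\<lambda>z. transpose_mat (T z)) z0 (\<lambda>z. col (transpose_mat (V z)) i)"
    by (rule left_root_mult_eq_transpose[OF S Vc])
  have roots: "root_fun S n (\<lambda>z. transpose_mat (T z)) z0 (\<lambda>z. col (transpose_mat (V z)) i)" if i: "i < r" for i
  proof -
    have lr: "left_root_fun S n T z0 (\<lambda>z. row (V z) i)" using L i by blast
    have eq: "col (transpose_mat (V z)) i = row (V z) i" if "z \<in> S" for z using Vc[OF that] i by simp
    show ?thesis using lr unfolding left_root_fun_def root_fun_def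
      using eq S(2) by (auto intro: holomorphic_transform)
  qed
  have sum: "(\<Sum>i<r. root_mult n (\<lambda>z. transpose_mat (T z)) z0 (\<lambda>z. col (transpose_mat (V z)) i)) = (\<Sum>i<r. ms ! i)"
    using L cong by (metis (no_types, lifting) lessThan_iff sum.cong)
  show ?thesis unfolding right_canonical_dim_def Let_def
  proof (intro conjI allI impI ballI)
    show "hol_mat S n r (\<lambda>z. transpose_mat (V z))" by (rule hol_mat_transpose[OF hV])
    show "\<And>i. i < r \<Longrightarrow> root_fun S n (\<lambda>z. transpose_mat (T z)) z0 (\<lambda>z. col (transpose_mat (V z)) i)" by (rule roots)
    show "\<And>c. c \<in> carrier_vec r \<Longrightarrow> transpose_mat (V z0) *\<^sub>v c = 0\<^sub>v n \<Longrightarrow> c = 0\<^sub>v r" using L by blast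
    show "(\<Sum>i<r. root_mult n (\<lambda>z. transpose_mat (T z)) z0 (\<lambda>z. col (transpose_mat (V z)) i)) = (\<Sum>i<r. ms ! i)" by (rule sum)
    fix i j assume ij: "i \<le> j" "j < r"
    have "left_root_mult n T z0 (\<lambda>z. row (V z) j) \<le> left_root_mult n T z0 (\<lambda>z. row (V z) i)"
      using L ij by blast
    thus "root_mult n (\<lambda>z. transpose_mat (T z)) z0 (\<lambda>z. col (transpose_mat (V z)) j) \<le> root_mult n (\<lambda>z. transpose_mat (T z)) z0 (\<lambda>z. col (transpose_mat (V z)) i)"
      using cong[of i] cong[of j] ij by simp
  qed
qed

lemma left_canonical_of_transpose:
  assumes S: "open S" "z0 \<in> S" and R: "right_canonical_dim S n r (\<lambda>z. transpose_mat (T z)) z0 ms Yt" and r: "r = kernel_dim (T z0)"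
  shows "left_canonical S n T z0 ms (\<lambda>z. transpose_mat (Yt z))"
proof -
  note R = R[unfolded right_canonical_dim_def Let_def]
  have hY: "hol_mat S n r Yt" using R by blast
  have Yc: "\<And>z. z \<in> S \<Longrightarrow> Yt z \<in> carrier_mat n r" using hol_matD(1)[OF hY] .
  have hV: "hol_mat S r n (\<lambda>z. transpose_mat (Yt z))" by (rule hol_mat_transpose[OF hY])
  have Vc: "\<And>z. z \<in> S \<Longrightarrow> transpose_mat (Yt z) \<in> carrier_mat r n" using hol_matD(1)[OF hV] .
  have cong: "\<And>i. i < r \<Longrightarrow> left_root_mult n T z0 (\<lambda>z. row (transpose_mat (Yt z)) i) = root_mult n (\<lambda>z. transpose_mat (T z)) z0 (\<lambda>z. col (Yt z) i)"
    using left_root_mult_eq_transpose[OF S Vc] by simp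
  have roots: "left_root_fun S n T z0 (\<lambda>z. row (transpose_mat (Yt z)) i)" if i: "i < r" for i
  proof -
    have lr: "root_fun S n (\<lambda>z. transpose_mat (T z)) z0 (\<lambda>z. col (Yt z) i)" using R i by blast
    have eq: "row (transpose_mat (Yt z)) i = col (Yt z) i" if "z \<in> S" for z using Yc[OF that] i by simp
    show ?thesis using lr unfolding left_root_fun_def root_fun_def
      using eq S(2) by (auto intro: holomorphic_transform)
  qed
  have sum: "(\<Sum>i<r. left_root_mult n T z0 (\<lambda>z. row (transpose_mat (Yt z)) i)) = (\<Sum>i<r. ms ! i)"
    using R cong by (metis (no_types, lifting) lessThan_iff sum.cong)
  show ?thesis unfolding left_canonical_def Let_def r[symmetric]
  proof (intro conjI allI impI ballI)
    show "hol_mat S r n (\<lambda>z. transpose_mat (Yt z))" by (rule hV)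
    show "\<And>i. i < r \<Longrightarrow> left_root_fun S n T z0 (\<lambda>z. row (transpose_mat (Yt z)) i)" by (rule roots)
    show "\<And>c. c \<in> carrier_vec r \<Longrightarrow> transpose_mat (transpose_mat (Yt z0)) *\<^sub>v c = 0\<^sub>v n \<Longrightarrow> c = 0\<^sub>v r" using R by simp
    show "(\<Sum>i<r. left_root_mult n T z0 (\<lambda>z. row (transpose_mat (Yt z)) i)) = (\<Sum>i<r. ms ! i)" by (rule sum)
    fix i j assume ij: "i \<le> j" "j < r"
    have "root_mult n (\<lambda>z. transpose_mat (T z)) z0 (\<lambda>z. col (Yt z) j) \<le> root_mult n (\<lambda>z. transpose_mat (T z)) z0 (\<lambda>z. col (Yt z) i)"
      using R ij by blast
    thus "left_root_mult n T z0 (\<lambda>z. row (transpose_mat (Yt z)) j) \<le> left_root_mult n T z0 (\<lambda>z. row (transpose_mat (Yt z)) i)"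
      using cong[of i] cong[of j] ij by simp
  qed
qed

lemma smith_right_canonicalI:
  assumes Sm: "local_smith_form U n r T UL UR ms z0" and US: "U \<subseteq> S" and R: "right_canonical_dim S n r T z0 ms Y"
  shows "smith_right_canonical U n r T UL UR ms z0 Y"
proof -
  interpret local_smith_form U n r T UL UR ms z0 by (rule Sm)
  note R = R[unfolded right_canonical_dim_def Let_def]
  show ?thesis
  proof (rule smith_right_canonical.intro[OF Sm], unfold_locales)
    show "hol_mat U n r Y" using R hol_mat_subset US by blast
    show "\<And>j. j < r \<Longrightarrow> col (Y z0) j \<noteq> 0\<^sub>v n" using R unfolding root_fun_def by blast
    show "\<And>j. j < r \<Longrightarrow> T z0 *\<^sub>v col (Y z0) j = 0\<^sub>v n" using R unfolding root_fun_def by blast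
    show "\<And>c. c \<in> carrier_vec r \<Longrightarrow> Y z0 *\<^sub>v c = 0\<^sub>v n \<Longrightarrow> c = 0\<^sub>v r" using R by blast
    show "(\<Sum>j<r. root_mult n T z0 (\<lambda>z. col (Y z) j)) = (\<Sum>j<r. ms ! j)" using R by blast
    show "\<And>i j. i \<le> j \<Longrightarrow> j < r \<Longrightarrow> root_mult n T z0 (\<lambda>z. col (Y z) j) \<le> root_mult n T z0 (\<lambda>z. col (Y z) i)"
      using R by blast
  qed
qed

lemma local_smith_form_transpose:
  assumes "local_smith_form U n r T UL UR ms z0"
  shows "local_smith_form U n r (\<lambda>z. transpose_mat (T z)) (\<lambda>z. transpose_mat (UR z)) (\<lambda>z. transpose_mat (UL z)) ms z0"
proof -
  interpret local_smith_form U n r T UL UR ms z0 by fact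
  show ?thesis
  proof (unfold_locales)
    show "hol_mat U n n (\<lambda>z. transpose_mat (T z))" by (rule hol_mat_transpose[OF T])
    show "hol_mat U n n (\<lambda>z. transpose_mat (UR z))" by (rule hol_mat_transpose[OF UR])
    show "hol_mat U n n (\<lambda>z. transpose_mat (UL z))" by (rule hol_mat_transpose[OF UL])
    show "\<And>z. z \<in> U \<Longrightarrow> det (transpose_mat (UR z)) \<noteq> 0" using dUR det_transpose URc by metis
    show "\<And>z. z \<in> U \<Longrightarrow> det (transpose_mat (UL z)) \<noteq> 0" using dUL det_transpose ULc by metis
    fix z assume z: "z \<in> U"
    have "transpose_mat (UR z) * transpose_mat (T z) * transpose_mat (UL z) = transpose_mat (UL z * T z * UR z)"
      using ULc[OF z] Tc[OF z] URc[OF z] by (simp add: transpose_mult[of _ n n _ n] assoc_mult_mat[of _ n n _ n _ n])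
    thus "transpose_mat (UR z) * transpose_mat (T z) * transpose_mat (UL z) = chi_diag n ms z0 z"
      unfolding sm[OF z] transpose_chi_diag .
  qed (use U len sorted rn zero in auto)
qed

lemma local_smith_form_exists:
  assumes \<Omega>: "open \<Omega>" "z0 \<in> \<Omega>" and T: "hol_mat \<Omega> n n T" and pm: "partial_mults \<Omega> n T z0 ms"
  obtains U UL UR where "U \<subseteq> \<Omega>" "local_smith_form U n (kernel_dim (T z0)) T UL UR ms z0"
proof -
  note pm = pm[unfolded partial_mults_def]
  have len: "length ms = n" using pm by (rule conjunct1)
  have sorted: "\<And>i j. i \<le> j \<Longrightarrow> j < n \<Longrightarrow> ms!j \<le> ms!i"
    using conjunct1[OF conjunct2[OF pm]] by blast
  obtain U0 UL UR where H: "open U0 \<and> z0 \<in> U0 \<and> U0 \<subseteq> \<Omega> \<and> hol_mat U0 n n UL \<and> hol_mat U0 n n UR \<and>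
        det (UL z0) \<noteq> 0 \<and> det (UR z0) \<noteq> 0 \<and> (\<forall>z\<in>U0. UL z * T z * UR z = chi_diag n ms z0 z)"
    using conjunct2[OF conjunct2[OF pm]] by (elim exE) (rule that)
  have U0: "open U0" "z0 \<in> U0" "U0 \<subseteq> \<Omega>" and hUL: "hol_mat U0 n n UL" and hUR: "hol_mat U0 n n UR"
    and dL0: "det (UL z0) \<noteq> 0" and dR0: "det (UR z0) \<noteq> 0"
    and sm: "\<And>z. z \<in> U0 \<Longrightarrow> UL z * T z * UR z = chi_diag n ms z0 z"
    using H by auto
  have "(\<lambda>z. det (UL z) * det (UR z)) holomorphic_on U0"
    using hol_det[OF hUL] hol_det[OF hUR] by (intro holomorphic_intros)
  then obtain U where U: "open U" "z0 \<in> U" "U \<subseteq> U0"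
    and dLR: "\<And>z. z \<in> U \<Longrightarrow> det (UL z) * det (UR z) \<noteq> 0"
    by (rule holomorphic_nonzero_nhd[OF U0(1,2)]) (use dL0 dR0 in auto)
  define c where "c = (LEAST i. i = n \<or> ms!i = 0)"
  note KD = kernel_dim_chi_diag[OF len sorted, folded c_def]
  have "kernel_dim (T z0) = kernel_dim (chi_diag n ms z0 z0)"
    by (rule kernel_dim_invertible_mult[OF hol_matD(1)[OF T \<Omega>(2)] hol_matD(1)[OF hUL U0(2)]
          hol_matD(1)[OF hUR U0(2)] dL0 dR0 sm[OF U0(2)]])
  hence r: "kernel_dim (T z0) = c" using KD(1) by simp
  have "local_smith_form U n (kernel_dim (T z0)) T UL UR ms z0"
  proof (unfold_locales)
    show "hol_mat U n n T" using hol_mat_subset[OF T] U U0 by blast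
    show "hol_mat U n n UL" using hol_mat_subset[OF hUL U(3)] .
    show "hol_mat U n n UR" using hol_mat_subset[OF hUR U(3)] .
    show "\<And>z. z \<in> U \<Longrightarrow> UL z * T z * UR z = chi_diag n ms z0 z" using sm U(3) by blast
    show "kernel_dim (T z0) \<le> n" using r KD(2) by simp
    show "\<And>i. kernel_dim (T z0) \<le> i \<Longrightarrow> i < n \<Longrightarrow> ms!i = 0" using r KD(4) by simp
  qed (use U dLR len sorted in auto)
  moreover have "U \<subseteq> \<Omega>" using U(3) U0(3) by blast
  ultimately show ?thesis using that by blast
qed

section \<open>Canonical pairs\<close>

locale canonical_pair =
  fixes U :: "complex set" and n r :: nat and T Y V G K :: "complex \<Rightarrow> complex mat"
    and ms :: "nat list" and z0 :: complex
  assumes U: "open U" "z0 \<in> U"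
    and T: "hol_mat U n n T" and Y: "hol_mat U n r Y" and V: "hol_mat U r n V"
    and G: "hol_mat U n r G" and K: "hol_mat U r n K"
    and TYG: "\<And>z. z \<in> U \<Longrightarrow> T z * Y z = G z * chi_diag r ms z0 z"
    and VTK: "\<And>z. z \<in> U \<Longrightarrow> V z * T z = chi_diag r ms z0 z * K z"
    and dP: "\<And>z. z \<in> U \<Longrightarrow> det (V z * G z) \<noteq> 0"
    and dQ: "\<And>z. z \<in> U \<Longrightarrow> det (K z * Y z) \<noteq> 0"
    and Yroot: "\<And>j. j < r \<Longrightarrow> T z0 *\<^sub>v col (Y z0) j = 0\<^sub>v n"
    and Yind: "\<And>c. c \<in> carrier_vec r \<Longrightarrow> Y z0 *\<^sub>v c = 0\<^sub>v n \<Longrightarrow> c = 0\<^sub>v r"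
    and Vroot: "\<And>j. j < r \<Longrightarrow> transpose_mat (T z0) *\<^sub>v col (transpose_mat (V z0)) j = 0\<^sub>v n"
    and Vind: "\<And>c. c \<in> carrier_vec r \<Longrightarrow> transpose_mat (V z0) *\<^sub>v c = 0\<^sub>v n \<Longrightarrow> c = 0\<^sub>v r"
    and sorted: "\<And>i j. i \<le> j \<Longrightarrow> j < r \<Longrightarrow> ms!j \<le> ms!i"
begin

abbreviation "\<Delta> \<equiv> chi_diag r ms z0"
definition "P z = V z * G z"
definition "Q z = K z * Y z"
abbreviation "W z \<equiv> V z * T z * Y z"

lemma Tc: "z \<in> U \<Longrightarrow> T z \<in> carrier_mat n n" using hol_matD(1)[OF T] .
lemma Yc: "z \<in> U \<Longrightarrow> Y z \<in> carrier_mat n r" using hol_matD(1)[OF Y] .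
lemma Vc: "z \<in> U \<Longrightarrow> V z \<in> carrier_mat r n" using hol_matD(1)[OF V] .
lemma Gc: "z \<in> U \<Longrightarrow> G z \<in> carrier_mat n r" using hol_matD(1)[OF G] .
lemma Kc: "z \<in> U \<Longrightarrow> K z \<in> carrier_mat r n" using hol_matD(1)[OF K] .
lemma Pc: "z \<in> U \<Longrightarrow> P z \<in> carrier_mat r r" unfolding P_def by (rule mult_carrier_mat[OF Vc Gc])
lemma Qc: "z \<in> U \<Longrightarrow> Q z \<in> carrier_mat r r" unfolding Q_def by (rule mult_carrier_mat[OF Kc Yc])
lemma Wc: "z \<in> U \<Longrightarrow> W z \<in> carrier_mat r r" by (rule mult_carrier_mat[OF mult_carrier_mat[OF Vc Tc] Yc])
lemma Pd: "z \<in> U \<Longrightarrow> det (P z) \<noteq> 0" unfolding P_def by (rule dP)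
lemma Qd: "z \<in> U \<Longrightarrow> det (Q z) \<noteq> 0" unfolding Q_def by (rule dQ)
lemma mP: "z \<in> U \<Longrightarrow> minv (P z) \<in> carrier_mat r r" "z \<in> U \<Longrightarrow> P z * minv (P z) = 1\<^sub>m r"
  "z \<in> U \<Longrightarrow> minv (P z) * P z = 1\<^sub>m r" using minv_inverse[OF Pc Pd] by auto
lemma mQ: "z \<in> U \<Longrightarrow> minv (Q z) \<in> carrier_mat r r" "z \<in> U \<Longrightarrow> Q z * minv (Q z) = 1\<^sub>m r"
  "z \<in> U \<Longrightarrow> minv (Q z) * Q z = 1\<^sub>m r" using minv_inverse[OF Qc Qd] by auto
lemma hol_P: "hol_mat U r r P" unfolding P_def by (rule hol_mat_mult[OF V G])
lemma hol_Q: "hol_mat U r r Q" unfolding Q_def by (rule hol_mat_mult[OF K Y])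
lemma hol_minv_P: "hol_mat U r r (\<lambda>z. minv (P z))" by (rule hol_minv[OF hol_P Pd])
lemma hol_minv_Q: "hol_mat U r r (\<lambda>z. minv (Q z))" by (rule hol_minv[OF hol_Q Qd])

lemma W_eq_P_Delta: assumes z: "z \<in> U" shows "W z = P z * \<Delta> z"
proof -
  have "W z = V z * (T z * Y z)" by (rule assoc_mult_mat[OF Vc[OF z] Tc[OF z] Yc[OF z]])
  also have "\<dots> = V z * (G z * \<Delta> z)" unfolding TYG[OF z] ..
  also have "\<dots> = P z * \<Delta> z" unfolding P_def by (rule assoc_mult_mat[symmetric, OF Vc[OF z] Gc[OF z] chi_diag_carrier])
  finally show ?thesis .
qed

lemma W_eq_Delta_Q: assumes z: "z \<in> U" shows "W z = \<Delta> z * Q z"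
proof -
  have "W z = (\<Delta> z * K z) * Y z" unfolding VTK[OF z] ..
  also have "\<dots> = \<Delta> z * Q z" unfolding Q_def by (rule assoc_mult_mat[OF chi_diag_carrier Kc[OF z] Yc[OF z]])
  finally show ?thesis .
qed

lemma Delta_minv_Q: assumes z: "z \<in> U" shows "\<Delta> z * minv (Q z) = minv (P z) * \<Delta> z"
proof -
  have "\<Delta> z * minv (Q z) = (minv (P z) * P z) * \<Delta> z * minv (Q z)"
    using mP(3)[OF z] by simp
  also have "\<dots> = minv (P z) * (P z * \<Delta> z) * minv (Q z)"
    by (simp add: assoc_mult_mat[OF mP(1)[OF z] Pc[OF z] chi_diag_carrier])
  also have "\<dots> = minv (P z) * (\<Delta> z * Q z) * minv (Q z)" unfolding W_eq_P_Delta[OF z, symmetric] W_eq_Delta_Q[OF z] ..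
  also have "\<dots> = minv (P z) * \<Delta> z * (Q z * minv (Q z))"
    using mP(1)[OF z] Qc[OF z] mQ(1)[OF z] by (simp add: assoc_mult_mat[of _ r r _ r _ r] mult_carrier_mat[of _ r r _ r])
  also have "\<dots> = minv (P z) * \<Delta> z" using mQ(2)[OF z] mP(1)[OF z] by simp
  finally show ?thesis .
qed

lemma det_W_nonzero: assumes z: "z \<in> U" "z \<noteq> z0" shows "det (W z) \<noteq> 0"
  unfolding W_eq_P_Delta[OF z(1)] using det_mult[OF Pc[OF z(1)] chi_diag_carrier] Pd[OF z(1)] chi_diag_inv(4)[OF z(2)] by simp

lemma minv_W: assumes z: "z \<in> U" "z \<noteq> z0"
  shows "minv (W z) = minv (Q z) * chi_diag_inv r ms z0 z" "minv (W z) = chi_diag_inv r ms z0 z * minv (P z)"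
proof -
  show "minv (W z) = minv (Q z) * chi_diag_inv r ms z0 z"
    unfolding W_eq_Delta_Q[OF z(1)] minv_mult_mat[OF chi_diag_carrier Qc[OF z(1)] chi_diag_inv(4)[OF z(2)] Qd[OF z(1)]]
      chi_diag_inv(5)[OF z(2)] ..
  show "minv (W z) = chi_diag_inv r ms z0 z * minv (P z)"
    unfolding W_eq_P_Delta[OF z(1)] minv_mult_mat[OF Pc[OF z(1)] chi_diag_carrier Pd[OF z(1)] chi_diag_inv(4)[OF z(2)]]
      chi_diag_inv(5)[OF z(2)] ..
qed


definition "Yhat z = Y z * minv (Q z)"
definition "Ghat z = G z * minv (P z)"

lemma Yhat_carrier: "z \<in> U \<Longrightarrow> Yhat z \<in> carrier_mat n r" unfolding Yhat_def by (rule mult_carrier_mat[OF Yc mQ(1)])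
lemma Ghat_carrier: "z \<in> U \<Longrightarrow> Ghat z \<in> carrier_mat n r" unfolding Ghat_def by (rule mult_carrier_mat[OF Gc mP(1)])
lemma hol_Yhat: "hol_mat U n r Yhat" unfolding Yhat_def by (rule hol_mat_mult[OF Y hol_minv_Q])
lemma hol_Ghat: "hol_mat U n r Ghat" unfolding Ghat_def by (rule hol_mat_mult[OF G hol_minv_P])

lemma T_Yhat: assumes z: "z \<in> U" shows "T z * Yhat z = Ghat z * \<Delta> z"
proof -
  have "T z * Yhat z = (T z * Y z) * minv (Q z)" unfolding Yhat_def
    by (rule assoc_mult_mat[symmetric, OF Tc[OF z] Yc[OF z] mQ(1)[OF z]])
  also have "\<dots> = G z * (\<Delta> z * minv (Q z))" unfolding TYG[OF z]
    by (rule assoc_mult_mat[OF Gc[OF z] chi_diag_carrier mQ(1)[OF z]])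
  also have "\<dots> = Ghat z * \<Delta> z" unfolding Delta_minv_Q[OF z] Ghat_def
    by (rule assoc_mult_mat[symmetric, OF Gc[OF z] mP(1)[OF z] chi_diag_carrier])
  finally show ?thesis .
qed

lemma V_Ghat: assumes z: "z \<in> U" shows "V z * Ghat z = 1\<^sub>m r"
proof -
  have "V z * Ghat z = (V z * G z) * minv (P z)" unfolding Ghat_def
    by (rule assoc_mult_mat[symmetric, OF Vc[OF z] Gc[OF z] mP(1)[OF z]])
  also have "\<dots> = P z * minv (P z)" unfolding P_def ..
  finally show ?thesis using mP(2)[OF z] by simp
qed

lemma T_Y_z0: "T z0 * Y z0 = 0\<^sub>m n r"
  by (rule mult_eq_zero_if_cols_zero[OF Tc[OF U(2)] Yc[OF U(2)] Yroot])

lemma Ghat_col_nonzero: assumes j: "j < r" shows "col (Ghat z0) j \<noteq> 0\<^sub>v n"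
proof
  assume h: "col (Ghat z0) j = 0\<^sub>v n"
  have "unit_vec r j = col (V z0 * Ghat z0) j" unfolding V_Ghat[OF U(2)] using j by simp
  also have "\<dots> = V z0 *\<^sub>v col (Ghat z0) j" by (rule col_mult2[OF Vc[OF U(2)] Ghat_carrier[OF U(2)] j])
  also have "\<dots> = 0\<^sub>v r" unfolding h using Vc[OF U(2)] by simp
  finally show False using unit_vec_nonzero[OF j] by contradiction
qed

lemma Yhat_z0_inj:
  assumes c: "c \<in> carrier_vec r" and h: "Yhat z0 *\<^sub>v c = 0\<^sub>v n"
  shows "c = 0\<^sub>v r"
proof -
  have mc: "minv (Q z0) *\<^sub>v c \<in> carrier_vec r" using mQ(1)[OF U(2)] c by simp
  have "Y z0 *\<^sub>v (minv (Q z0) *\<^sub>v c) = 0\<^sub>v n"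
    using h unfolding Yhat_def using assoc_mult_mat_vec[OF Yc[OF U(2)] mQ(1)[OF U(2)] c] by simp
  hence "minv (Q z0) *\<^sub>v c = 0\<^sub>v r" using Yind[OF mc] by simp
  hence "Q z0 *\<^sub>v (minv (Q z0) *\<^sub>v c) = 0\<^sub>v r" using Qc[OF U(2)] by simp
  moreover have "Q z0 *\<^sub>v (minv (Q z0) *\<^sub>v c) = c"
    using assoc_mult_mat_vec[OF Qc[OF U(2)] mQ(1)[OF U(2)] c] mQ(2)[OF U(2)] c by simp
  ultimately show ?thesis by simp
qed

lemma root_mult_Yhat: assumes j: "j < r" shows "root_mult n T z0 (\<lambda>z. col (Yhat z) j) = ms!j"
proof -
  have "T z *\<^sub>v col (Yhat z) j = (z - z0)^(ms!j) \<cdot>\<^sub>v col (Ghat z) j" if z: "z \<in> U" for z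
  proof -
    have "T z *\<^sub>v col (Yhat z) j = col (T z * Yhat z) j"
      by (rule col_mult2[symmetric, OF Tc[OF z] Yhat_carrier[OF z] j])
    also have "\<dots> = (z - z0)^(ms!j) \<cdot>\<^sub>v col (Ghat z) j"
      unfolding T_Yhat[OF z] by (rule col_mult_chi_diag[OF Ghat_carrier[OF z] j])
    finally show ?thesis .
  qed
  thus ?thesis unfolding root_mult_def
    by (rule vec_zero_order_power_factor[OF hol_mat_col[OF hol_Ghat j] U _ Ghat_col_nonzero[OF j]])
qed

lemma right_canonical_Yhat: "right_canonical_dim U n r T z0 ms Yhat"
proof -
  have root: "root_fun U n T z0 (\<lambda>z. col (Yhat z) j)" if j: "j < r" for j
    unfolding root_fun_def
  proof (intro conjI allI impI ballI)
    show "col (Yhat z) j \<in> carrier_vec n" if "z \<in> U" for z using Yhat_carrier[OF that] by (rule col_carrier_vec[OF j])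
    show "(\<lambda>z. col (Yhat z) j $ i) holomorphic_on U" if "i < n" for i
      using hol_vecD(2)[OF hol_mat_col[OF hol_Yhat j] that] .
    show "col (Yhat z0) j \<noteq> 0\<^sub>v n"
      using Yhat_z0_inj[OF unit_vec_carrier] mult_mat_vec_unit_vec[OF Yhat_carrier[OF U(2)] j] j by force
    have "T z0 * Yhat z0 = (T z0 * Y z0) * minv (Q z0)" unfolding Yhat_def
      by (rule assoc_mult_mat[symmetric, OF Tc[OF U(2)] Yc[OF U(2)] mQ(1)[OF U(2)]])
    also have "\<dots> = 0\<^sub>m n r" unfolding T_Y_z0 using mQ(1)[OF U(2)] by simp
    finally show "T z0 *\<^sub>v col (Yhat z0) j = 0\<^sub>v n"
      using col_mult2[OF Tc[OF U(2)] Yhat_carrier[OF U(2)] j] j by simp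
  qed
  show ?thesis unfolding right_canonical_dim_def Let_def
    using hol_Yhat root Yhat_z0_inj root_mult_Yhat sorted by auto
qed

lemma Yhat_eq: assumes z: "z \<in> U" "z \<noteq> z0" shows "Y z * minv (W z) * \<Delta> z = Yhat z"
proof -
  have "Y z * minv (W z) * \<Delta> z = Y z * (minv (Q z) * (chi_diag_inv r ms z0 z * \<Delta> z))"
    unfolding minv_W(1)[OF z] using Yc[OF z(1)] mQ(1)[OF z(1)] chi_diag_inv(3)[OF z(2)]
    by (simp add: assoc_mult_mat[of _ n r _ r _ r] assoc_mult_mat[of _ r r _ r _ r] mult_carrier_mat[of _ r r _ r])
  also have "\<dots> = Yhat z" unfolding chi_diag_inv(2)[OF z(2)] Yhat_def using mQ(1)[OF z(1)] by simp
  finally show ?thesis .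
qed


lemma V_T_Yhat: assumes z: "z \<in> U" shows "V z * T z * Yhat z = \<Delta> z"
proof -
  have "V z * T z * Yhat z = (V z * T z * Y z) * minv (Q z)" unfolding Yhat_def
    by (rule assoc_mult_mat[symmetric, OF mult_carrier_mat[OF Vc[OF z] Tc[OF z]] Yc[OF z] mQ(1)[OF z]])
  also have "\<dots> = \<Delta> z * (Q z * minv (Q z))" unfolding W_eq_Delta_Q[OF z]
    by (rule assoc_mult_mat[OF chi_diag_carrier Qc[OF z] mQ(1)[OF z]])
  finally show ?thesis using mQ(2)[OF z] by simp
qed

lemma biorthogonal_right_off_z0: assumes z: "z \<in> U" "z \<noteq> z0"
  shows "minv (\<Delta> z) * V z * T z * (Y z * minv (W z) * \<Delta> z) * minv (\<Delta> z) = minv (\<Delta> z)"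
proof -
  let ?I = "chi_diag_inv r ms z0 z"
  have Ic: "?I \<in> carrier_mat r r" by (rule chi_diag_inv(3)[OF z(2)])
  have "minv (\<Delta> z) * V z * T z * Yhat z = ?I * (V z * T z * Yhat z)"
    unfolding chi_diag_inv(5)[OF z(2)]
    using Ic Vc[OF z(1)] Tc[OF z(1)] Yhat_carrier[OF z(1)]
    by (simp add: assoc_mult_mat[of _ r r _ n _ n] assoc_mult_mat[of _ r r _ n _ r] assoc_mult_mat[of _ r n _ n _ r]
        mult_carrier_mat[of _ r r _ n] mult_carrier_mat[of _ r n _ n] mult_carrier_mat[of _ n n _ r])
  also have "\<dots> = 1\<^sub>m r" unfolding V_T_Yhat[OF z(1)] chi_diag_inv(2)[OF z(2)] ..
  finally show ?thesis unfolding Yhat_eq[OF z] chi_diag_inv(5)[OF z(2)] using Ic by simp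
qed

lemma Vh_T_Y: assumes z: "z \<in> U" "z \<noteq> z0" shows "\<Delta> z * minv (W z) * V z * T z * Y z = \<Delta> z"
proof -
  have mW: "minv (W z) \<in> carrier_mat r r" using minv_inverse(1)[OF Wc[OF z(1)] det_W_nonzero[OF z]] .
  have "\<Delta> z * minv (W z) * V z * T z * Y z = \<Delta> z * (minv (W z) * (V z * T z * Y z))"
    using mW Vc[OF z(1)] Tc[OF z(1)] Yc[OF z(1)]
    by (simp add: assoc_mult_mat[of _ r r _ r _ n] assoc_mult_mat[of _ r r _ n _ n] assoc_mult_mat[of _ r n _ n _ r]
        assoc_mult_mat[of _ r r _ n _ r]
        mult_carrier_mat[of _ r r _ n] mult_carrier_mat[of _ r n _ n] mult_carrier_mat[of _ n n _ r] mult_carrier_mat[of _ r r _ r])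
  also have "\<dots> = \<Delta> z" using minv_inverse(3)[OF Wc[OF z(1)] det_W_nonzero[OF z]] by simp
  finally show ?thesis .
qed

lemma biorthogonal_left_off_z0: assumes z: "z \<in> U" "z \<noteq> z0"
  shows "minv (\<Delta> z) * (\<Delta> z * minv (W z) * V z) * T z * Y z * minv (\<Delta> z) = minv (\<Delta> z)"
proof -
  let ?I = "chi_diag_inv r ms z0 z"
  have Ic: "?I \<in> carrier_mat r r" by (rule chi_diag_inv(3)[OF z(2)])
  have mW: "minv (W z) \<in> carrier_mat r r" using minv_inverse(1)[OF Wc[OF z(1)] det_W_nonzero[OF z]] .
  have VhC: "\<Delta> z * minv (W z) * V z \<in> carrier_mat r n"
    by (rule mult_carrier_mat[OF mult_carrier_mat[OF chi_diag_carrier mW] Vc[OF z(1)]])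
  have "?I * (\<Delta> z * minv (W z) * V z) * T z * Y z = ?I * (\<Delta> z * minv (W z) * V z * T z * Y z)"
    using Ic VhC Tc[OF z(1)] Yc[OF z(1)]
    by (simp add: assoc_mult_mat[of _ r r _ n _ n] assoc_mult_mat[of _ r r _ n _ r] assoc_mult_mat[of _ r n _ n _ r]
        mult_carrier_mat[of _ r r _ n] mult_carrier_mat[of _ r n _ n] mult_carrier_mat[of _ n n _ r])
  also have "\<dots> = 1\<^sub>m r" unfolding Vh_T_Y[OF z] chi_diag_inv(2)[OF z(2)] ..
  finally show ?thesis unfolding chi_diag_inv(5)[OF z(2)] using Ic by simp
qed

lemma Vh_eq: assumes z: "z \<in> U" "z \<noteq> z0" shows "\<Delta> z * minv (W z) * V z = minv (P z) * V z"
proof -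
  have "\<Delta> z * minv (W z) = minv (P z)"
    unfolding minv_W(2)[OF z] using chi_diag_inv(3)[OF z(2)] mP(1)[OF z(1)]
    by (simp add: assoc_mult_mat[symmetric, of _ r r _ r _ r] chi_diag_inv(1)[OF z(2)])
  thus ?thesis by simp
qed


definition "Proj z = 1\<^sub>m n - Y z * minv (Q z) * K z"

lemma Proj_carrier: assumes z: "z \<in> U" shows "Proj z \<in> carrier_mat n n"
  unfolding Proj_def by (rule minus_carrier_mat[OF mult_carrier_mat[OF mult_carrier_mat[OF Yc[OF z] mQ(1)[OF z]] Kc[OF z]]])

lemma hol_Proj: "hol_mat U n n Proj"
  unfolding Proj_def by (rule hol_mat_minus[OF hol_mat_const[OF one_carrier_mat] hol_mat_mult[OF hol_mat_mult[OF Y hol_minv_Q] K]])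

lemma Proj_Y: assumes z: "z \<in> U" shows "Proj z * Y z = 0\<^sub>m n r"
proof -
  have YQK: "Y z * minv (Q z) * K z \<in> carrier_mat n n" by (rule mult_carrier_mat[OF mult_carrier_mat[OF Yc[OF z] mQ(1)[OF z]] Kc[OF z]])
  have "Proj z * Y z = Y z - Y z * minv (Q z) * K z * Y z"
    unfolding Proj_def using minus_mult_distrib_mat[OF one_carrier_mat YQK Yc[OF z]] Yc[OF z] by simp
  also have "Y z * minv (Q z) * K z * Y z = Y z * minv (Q z) * (K z * Y z)"
    by (rule assoc_mult_mat[OF mult_carrier_mat[OF Yc[OF z] mQ(1)[OF z]] Kc[OF z] Yc[OF z]])
  also have "\<dots> = Y z * minv (Q z) * Q z" unfolding Q_def[symmetric] ..
  also have "\<dots> = Y z * (minv (Q z) * Q z)" by (rule assoc_mult_mat[OF Yc[OF z] mQ(1)[OF z] Qc[OF z]])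
  also have "\<dots> = Y z" using mQ(3)[OF z] Yc[OF z] by simp
  finally show ?thesis using Yc[OF z] by simp
qed

lemma biorthogonal_right:
  "pp_eq r r z0 (\<lambda>z. minv (\<Delta> z) * V z * T z * (Y z * minv (W z) * \<Delta> z) * minv (\<Delta> z)) (\<lambda>z. minv (\<Delta> z))"
  by (rule pp_eq_if_eq_near[OF U]) (use biorthogonal_right_off_z0 minv_carrier in auto)

lemma biorthogonal_left:
  "pp_eq r r z0 (\<lambda>z. minv (\<Delta> z) * (\<Delta> z * minv (W z) * V z) * T z * Y z * minv (\<Delta> z)) (\<lambda>z. minv (\<Delta> z))"
  by (rule pp_eq_if_eq_near[OF U]) (use biorthogonal_left_off_z0 minv_carrier in auto)

lemma Proj_minv_T:
  assumes z: "z \<in> U" "z \<noteq> z0" and dT: "det (T z) \<noteq> 0"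
  shows "Proj z * minv (T z) = minv (T z) - Y z * minv (W z) * V z"
proof -
  let ?I = "chi_diag_inv r ms z0 z"
  have Ic: "?I \<in> carrier_mat r r" by (rule chi_diag_inv(3)[OF z(2)])
  note mT = minv_inverse[OF Tc[OF z(1)] dT]
  have "K z = ?I * (V z * T z)"
    unfolding VTK[OF z(1)] using Ic Kc[OF z(1)]
    by (simp add: assoc_mult_mat[symmetric, of _ r r _ r _ n] chi_diag_inv(2)[OF z(2)])
  hence "K z * minv (T z) = ?I * V z * (T z * minv (T z))"
    using Ic Vc[OF z(1)] Tc[OF z(1)] mT(1)
    by (simp add: assoc_mult_mat[of _ r r _ n _ n] assoc_mult_mat[of _ r n _ n _ n] mult_carrier_mat[of _ r r _ n]
        mult_carrier_mat[of _ r n _ n] mult_carrier_mat[of _ n n _ n])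
  hence K_minv_T: "K z * minv (T z) = ?I * V z" using mT(2) Ic Vc[OF z(1)] by simp
  have YQKc: "Y z * minv (Q z) * K z \<in> carrier_mat n n"
    by (rule mult_carrier_mat[OF mult_carrier_mat[OF Yc[OF z(1)] mQ(1)[OF z(1)]] Kc[OF z(1)]])
  have "Proj z * minv (T z) = minv (T z) - Y z * minv (Q z) * K z * minv (T z)"
    unfolding Proj_def using minus_mult_distrib_mat[OF one_carrier_mat YQKc mT(1)] mT(1) by simp
  also have "Y z * minv (Q z) * K z * minv (T z) = Y z * minv (Q z) * (K z * minv (T z))"
    by (rule assoc_mult_mat[OF mult_carrier_mat[OF Yc[OF z(1)] mQ(1)[OF z(1)]] Kc[OF z(1)] mT(1)])
  also have "\<dots> = Y z * (minv (Q z) * ?I) * V z" unfolding K_minv_T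
    using Yc[OF z(1)] mQ(1)[OF z(1)] Ic Vc[OF z(1)]
    by (simp add: assoc_mult_mat[of _ n r _ r _ n] assoc_mult_mat[of _ n r _ r _ r] assoc_mult_mat[of _ r r _ r _ n]
        mult_carrier_mat[of _ n r _ r] mult_carrier_mat[of _ r r _ r])
  also have "\<dots> = Y z * minv (W z) * V z" unfolding minv_W(1)[OF z] ..
  finally show ?thesis .
qed

lemma canonical_pair_transpose:
  "canonical_pair U n r (\<lambda>z. transpose_mat (T z)) (\<lambda>z. transpose_mat (V z)) (\<lambda>z. transpose_mat (Y z))
     (\<lambda>z. transpose_mat (K z)) (\<lambda>z. transpose_mat (G z)) ms z0"
proof (unfold_locales)
  fix z assume z: "z \<in> U"
  have "transpose_mat (Y z) * transpose_mat (T z) = transpose_mat (T z * Y z)"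
    using transpose_mult[OF Tc[OF z] Yc[OF z]] by simp
  thus "transpose_mat (Y z) * transpose_mat (T z) = \<Delta> z * transpose_mat (G z)"
    unfolding TYG[OF z] using transpose_mult[OF Gc[OF z] chi_diag_carrier] transpose_chi_diag by simp
  have "transpose_mat (T z) * transpose_mat (V z) = transpose_mat (V z * T z)"
    using transpose_mult[OF Vc[OF z] Tc[OF z]] by simp
  thus "transpose_mat (T z) * transpose_mat (V z) = transpose_mat (K z) * \<Delta> z"
    unfolding VTK[OF z] using transpose_mult[OF chi_diag_carrier Kc[OF z]] transpose_chi_diag by simp
  have "transpose_mat (Y z) * transpose_mat (K z) = transpose_mat (Q z)"
    unfolding Q_def using transpose_mult[OF Kc[OF z] Yc[OF z]] by simp
  thus "det (transpose_mat (Y z) * transpose_mat (K z)) \<noteq> 0"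
    using Qd[OF z] det_transpose[OF Qc[OF z]] by simp
  have "transpose_mat (G z) * transpose_mat (V z) = transpose_mat (P z)"
    unfolding P_def using transpose_mult[OF Vc[OF z] Gc[OF z]] by simp
  thus "det (transpose_mat (G z) * transpose_mat (V z)) \<noteq> 0"
    using Pd[OF z] det_transpose[OF Pc[OF z]] by simp
next
  show "\<And>j. j < r \<Longrightarrow> transpose_mat (transpose_mat (T z0)) *\<^sub>v col (transpose_mat (transpose_mat (Y z0))) j = 0\<^sub>v n"
    using Yroot Tc[OF U(2)] Yc[OF U(2)] by simp
  show "\<And>c. c \<in> carrier_vec r \<Longrightarrow> transpose_mat (transpose_mat (Y z0)) *\<^sub>v c = 0\<^sub>v n \<Longrightarrow> c = 0\<^sub>v r"
    using Yind Yc[OF U(2)] by simp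
qed (use U hol_mat_transpose[OF T] hol_mat_transpose[OF Y] hol_mat_transpose[OF V] hol_mat_transpose[OF G]
       hol_mat_transpose[OF K] Vroot Vind sorted in auto)

lemma left_canonical_Vhat:
  assumes r: "r = kernel_dim (T z0)"
  obtains V' where "\<And>z. z \<in> U \<Longrightarrow> V' z = minv (P z) * V z" "left_canonical U n T z0 ms V'"
proof -
  interpret CT: canonical_pair U n r "\<lambda>z. transpose_mat (T z)" "\<lambda>z. transpose_mat (V z)"
    "\<lambda>z. transpose_mat (Y z)" "\<lambda>z. transpose_mat (K z)" "\<lambda>z. transpose_mat (G z)" ms z0
    by (rule canonical_pair_transpose)
  have "transpose_mat (CT.Yhat z) = minv (P z) * V z" if z: "z \<in> U" for z
  proof -
    have "CT.Q z = transpose_mat (P z)"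
      unfolding CT.Q_def P_def using transpose_mult[OF Vc[OF z] Gc[OF z]] by simp
    hence "CT.Yhat z = transpose_mat (V z) * transpose_mat (minv (P z))"
      unfolding CT.Yhat_def using minv_transpose[OF Pc[OF z] Pd[OF z]] by simp
    thus ?thesis
      using transpose_mult[OF transpose_carrier_mat[THEN iffD2, OF Vc[OF z]]
          transpose_carrier_mat[THEN iffD2, OF minv_carrier[OF Pc[OF z]]]] by simp
  qed
  with left_canonical_of_transpose[OF U CT.right_canonical_Yhat r] show thesis
    using that[of "\<lambda>z. transpose_mat (CT.Yhat z)"] by blast
qed

end

locale completed_canonical_pair = canonical_pair +
  fixes Yf B :: "complex \<Rightarrow> complex mat"
  assumes Yf: "hol_mat U n n Yf" and B: "hol_mat U n n B"
    and dB: "\<And>z. z \<in> U \<Longrightarrow> det (B z) \<noteq> 0"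
    and rn: "r \<le> n" and zero: "\<And>j. r \<le> j \<Longrightarrow> j < n \<Longrightarrow> ms!j = 0"
    and Yf_col: "\<And>z j. z \<in> U \<Longrightarrow> j < r \<Longrightarrow> col (Yf z) j = col (Y z) j"
    and TYf: "\<And>z. z \<in> U \<Longrightarrow> T z * Yf z = B z * chi_diag n ms z0 z"
begin

lemma Yfc: "z \<in> U \<Longrightarrow> Yf z \<in> carrier_mat n n" using hol_matD(1)[OF Yf] .
lemma Bc: "z \<in> U \<Longrightarrow> B z \<in> carrier_mat n n" using hol_matD(1)[OF B] .

lemma minv_T_eq:
  assumes z: "z \<in> U" "z \<noteq> z0"
  shows "det (T z) \<noteq> 0" "minv (T z) = Yf z * chi_diag_inv n ms z0 z * minv (B z)"
proof -
  let ?N = "chi_diag_inv n ms z0 z"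
  have Nc: "?N \<in> carrier_mat n n" by (rule chi_diag_inv(3)[OF z(2)])
  note mB = minv_inverse[OF Bc[OF z(1)] dB[OF z(1)]]
  have "T z * (Yf z * ?N * minv (B z)) = (T z * Yf z) * ?N * minv (B z)"
    using Tc[OF z(1)] Yfc[OF z(1)] Nc mB(1)
    by (simp add: assoc_mult_mat[of _ n n _ n _ n] mult_carrier_mat[of _ n n _ n])
  also have "\<dots> = B z * (chi_diag n ms z0 z * ?N) * minv (B z)"
    unfolding TYf[OF z(1)] using Bc[OF z(1)] Nc mB(1)
    by (simp add: assoc_mult_mat[of _ n n _ n _ n] mult_carrier_mat[of _ n n _ n])
  also have "\<dots> = 1\<^sub>m n" unfolding chi_diag_inv(1)[OF z(2)] using Bc[OF z(1)] mB(2) by simp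
  finally have right_inv: "T z * (Yf z * ?N * minv (B z)) = 1\<^sub>m n" .
  have RC: "Yf z * ?N * minv (B z) \<in> carrier_mat n n" using Yfc[OF z(1)] Nc mB(1) by simp
  have "det (T z) * det (Yf z * ?N * minv (B z)) = 1"
    using det_mult[OF Tc[OF z(1)] RC] right_inv by simp
  thus dT: "det (T z) \<noteq> 0" by auto
  note mT = minv_inverse[OF Tc[OF z(1)] dT]
  show "minv (T z) = Yf z * ?N * minv (B z)"
    by (rule mat_inverse_unique[OF Tc[OF z(1)] mT(1) RC mT(3) right_inv])
qed

text \<open>The projection \<open>Proj\<close> kills the first \<open>r\<close> columns of \<open>Yf\<close>; on the others \<open>D\<close> is the identity.\<close>
lemma Proj_Yf_chi_diag_inv:
  assumes z: "z \<in> U" "z \<noteq> z0"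
  shows "Proj z * Yf z * chi_diag_inv n ms z0 z = Proj z * Yf z"
proof (rule eq_matI)
  fix i j assume "i < dim_row (Proj z * Yf z)" "j < dim_col (Proj z * Yf z)"
  hence ij: "i < n" "j < n" using Proj_carrier[OF z(1)] Yfc[OF z(1)] by auto
  have M: "Proj z * Yf z \<in> carrier_mat n n" using Proj_carrier[OF z(1)] Yfc[OF z(1)] by simp
  have "(Proj z * Yf z * chi_diag_inv n ms z0 z) $$ (i,j) = (Proj z * Yf z) $$ (i,j) * (1 / (z - z0)^(ms!j))"
    unfolding chi_diag_inv_def by (rule mult_diag_right[OF M ij])
  also have "\<dots> = (Proj z * Yf z) $$ (i,j)"
  proof (cases "j < r")
    case True
    have "(Proj z * Yf z) $$ (i,j) = (Proj z *\<^sub>v col (Y z) j) $ i"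
      using M Proj_carrier[OF z(1)] Yfc[OF z(1)] ij Yf_col[OF z(1) True] by simp
    also have "Proj z *\<^sub>v col (Y z) j = col (Proj z * Y z) j"
      by (rule col_mult2[symmetric, OF Proj_carrier[OF z(1)] Yc[OF z(1)] True])
    also have "\<dots> = 0\<^sub>v n" unfolding Proj_Y[OF z(1)] using True by simp
    finally show ?thesis using ij by simp
  next
    case False thus ?thesis using zero[of j] ij by simp
  qed
  finally show "(Proj z * Yf z * chi_diag_inv n ms z0 z) $$ (i,j) = (Proj z * Yf z) $$ (i,j)" .
qed (use Proj_carrier[OF z(1)] Yfc[OF z(1)] in auto)

lemma principal_part_minv_T:
  "pp_eq n n z0 (\<lambda>z. minv (T z)) (\<lambda>z. Y z * minv (W z) * V z)"
proof (rule pp_eqI[OF U hol_mat_uminus[OF hol_mat_mult[OF hol_mat_mult[OF hol_Proj Yf] hol_minv[OF B dB]]]])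
  fix z assume z: "z \<in> U" "z \<noteq> z0"
  note dT = minv_T_eq(1)[OF z]
  have mTc: "minv (T z) \<in> carrier_mat n n" by (rule minv_carrier[OF Tc[OF z(1)]])
  show "minv (T z) \<in> carrier_mat n n" by (rule mTc)
  show YWVc: "Y z * minv (W z) * V z \<in> carrier_mat n n"
    using Yc[OF z(1)] minv_carrier[OF Wc[OF z(1)]] Vc[OF z(1)] by (meson mult_carrier_mat)
  have "Proj z * minv (T z) = (Proj z * Yf z * chi_diag_inv n ms z0 z) * minv (B z)"
    unfolding minv_T_eq(2)[OF z]
    using Proj_carrier[OF z(1)] Yfc[OF z(1)] chi_diag_inv(3)[OF z(2)] minv_carrier[OF Bc[OF z(1)]]
    by (simp add: assoc_mult_mat[of _ n n _ n _ n] mult_carrier_mat[of _ n n _ n])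
  also have "\<dots> = Proj z * Yf z * minv (B z)" unfolding Proj_Yf_chi_diag_inv[OF z] ..
  finally have "Proj z * minv (T z) = Proj z * Yf z * minv (B z)" .
  hence "minv (T z) - Y z * minv (W z) * V z = Proj z * Yf z * minv (B z)"
    using Proj_minv_T[OF z dT] by simp
  moreover have "A - B = - (B - A)" if "A \<in> carrier_mat n n" "B \<in> carrier_mat n n" for A B :: "complex mat"
    by (rule eq_matI) (use that in auto)
  ultimately show "Y z * minv (W z) * V z - minv (T z) = - (Proj z * Yf z * minv (B z))"
    using mTc YWVc by metis
qed

end

lemma left_canonical_factor:
  assumes RY: "smith_right_canonical U n r T UL UR ms z0 Y"
    and RV: "smith_right_canonical U n r (\<lambda>z. transpose_mat (T z)) (\<lambda>z. transpose_mat (UR z))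
               (\<lambda>z. transpose_mat (UL z)) ms z0 (\<lambda>z. transpose_mat (V z))"
  obtains K where "hol_mat U r n K" "\<And>z. z \<in> U \<Longrightarrow> V z * T z = chi_diag r ms z0 z * K z"
    "det (K z0 * Y z0) \<noteq> 0"
proof -
  interpret RY: smith_right_canonical U n r T UL UR ms z0 Y by (rule RY)
  interpret RV: smith_right_canonical U n r "\<lambda>z. transpose_mat (T z)" "\<lambda>z. transpose_mat (UR z)"
      "\<lambda>z. transpose_mat (UL z)" ms z0 "\<lambda>z. transpose_mat (V z)" by (rule RV)
  obtain K' where hK': "hol_mat U n r K'"
    and TVK: "\<And>z. z \<in> U \<Longrightarrow> transpose_mat (T z) * transpose_mat (V z) = K' z * chi_diag r ms z0 z"
    using RV.T_Y_factor by blast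
  have Vc: "V z \<in> carrier_mat r n" and K'c: "K' z \<in> carrier_mat n r" if "z \<in> U" for z
    using RV.Yc[OF that] hol_matD(1)[OF hK' that] by auto
  have "V z * T z = chi_diag r ms z0 z * transpose_mat (K' z)" if z: "z \<in> U" for z
  proof -
    have "V z * T z = transpose_mat (transpose_mat (T z) * transpose_mat (V z))"
      using arg_cong[OF transpose_mult[OF Vc[OF z] RY.Tc[OF z]], of transpose_mat] by simp
    also have "\<dots> = transpose_mat (K' z * chi_diag r ms z0 z)" unfolding TVK[OF z] ..
    also have "\<dots> = chi_diag r ms z0 z * transpose_mat (K' z)"
      using transpose_mult[OF K'c[OF z] chi_diag_carrier] transpose_chi_diag by simp
    finally show ?thesis .
  qed
  moreover have "det (transpose_mat (Y z0) * K' z0) \<noteq> 0"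
    by (rule RV.det_left_kernel_mult_G[OF hK' TVK]) (use RY.Yc[OF RY.U(2)] RY.Yroot RY.Yind in auto)
  hence "det (transpose_mat (K' z0) * Y z0) \<noteq> 0"
    using det_transpose[OF mult_carrier_mat[OF transpose_carrier_mat[THEN iffD2, OF K'c] RY.Yc], OF RY.U(2) RY.U(2)]
      transpose_mult[OF transpose_carrier_mat[THEN iffD2, OF K'c] RY.Yc, OF RY.U(2) RY.U(2)]
    by simp
  ultimately show thesis using that[OF hol_mat_transpose[OF hK']] by blast
qed

lemma completed_canonical_pair_exists:
  assumes \<Omega>: "open \<Omega>" "z0 \<in> \<Omega>" and T: "hol_mat \<Omega> n n T" and pm: "partial_mults \<Omega> n T z0 ms"
    and L: "left_canonical \<Omega> n T z0 ms V" and R: "right_canonical \<Omega> n T z0 ms Y"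
  obtains U G K Yf B where "U \<subseteq> \<Omega>"
    "completed_canonical_pair U n (kernel_dim (T z0)) T Y V G K ms z0 Yf B"
proof -
  define r where "r = kernel_dim (T z0)"
  obtain U UL UR where UO: "U \<subseteq> \<Omega>" and Sm: "local_smith_form U n r T UL UR ms z0"
    using local_smith_form_exists[OF \<Omega> T pm] unfolding r_def by blast
  interpret S: local_smith_form U n r T UL UR ms z0 by (rule Sm)
  have "right_canonical_dim \<Omega> n r T z0 ms Y" using R unfolding right_canonical_eq_dim r_def .
  then interpret RY: smith_right_canonical U n r T UL UR ms z0 Y
    by (rule smith_right_canonicalI[OF Sm UO])
  have "right_canonical_dim \<Omega> n r (\<lambda>z. transpose_mat (T z)) z0 ms (\<lambda>z. transpose_mat (V z))"
    by (rule left_canonical_transpose[OF \<Omega> L r_def])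
  then interpret RV: smith_right_canonical U n r "\<lambda>z. transpose_mat (T z)" "\<lambda>z. transpose_mat (UR z)"
      "\<lambda>z. transpose_mat (UL z)" ms z0 "\<lambda>z. transpose_mat (V z)"
    by (rule smith_right_canonicalI[OF local_smith_form_transpose[OF Sm] UO])
  obtain G where hG: "hol_mat U n r G" and TYG: "\<And>z. z \<in> U \<Longrightarrow> T z * Y z = G z * chi_diag r ms z0 z"
    using RY.T_Y_factor by blast
  obtain K where hK: "hol_mat U r n K" and VTK: "\<And>z. z \<in> U \<Longrightarrow> V z * T z = chi_diag r ms z0 z * K z"
    and dQ0: "det (K z0 * Y z0) \<noteq> 0"
    using left_canonical_factor[OF RY.smith_right_canonical_axioms RV.smith_right_canonical_axioms] by blast
  have hV: "hol_mat U r n V" using hol_mat_transpose[OF RV.Y] by simp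
  have dP0: "det (V z0 * G z0) \<noteq> 0"
    by (rule RY.det_left_kernel_mult_G[OF hG TYG hol_matD(1)[OF hV S.U(2)] RV.Yroot RV.Yind])
  have "(\<lambda>z. det (V z * G z) * det (K z * Y z) * det (RY.Bf G z)) holomorphic_on U"
    using hol_det[OF hol_mat_mult[OF hV hG]] hol_det[OF hol_mat_mult[OF hK RY.Y]]
      hol_det[OF RY.hol_Bf[OF hG TYG]] by (intro holomorphic_intros)
  then obtain U1 where U1: "open U1" "z0 \<in> U1" "U1 \<subseteq> U"
    and d1: "\<And>z. z \<in> U1 \<Longrightarrow> det (V z * G z) * det (K z * Y z) * det (RY.Bf G z) \<noteq> 0"
    by (rule holomorphic_nonzero_nhd[OF S.U]) (use dP0 dQ0 RY.det_Bf[OF hG TYG] in auto)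
  have "completed_canonical_pair U1 n r T Y V G K ms z0 RY.Yf (RY.Bf G)"
  proof (unfold_locales)
    show "\<And>z. z \<in> U1 \<Longrightarrow> V z * T z = chi_diag r ms z0 z * K z" using VTK U1(3) by blast
    show "\<And>z. z \<in> U1 \<Longrightarrow> T z * Y z = G z * chi_diag r ms z0 z" using TYG U1(3) by blast
    show "\<And>z. z \<in> U1 \<Longrightarrow> T z * RY.Yf z = RY.Bf G z * chi_diag n ms z0 z"
      using RY.TYf[OF hG TYG] U1(3) by blast
    show "\<And>z j. z \<in> U1 \<Longrightarrow> j < r \<Longrightarrow> col (RY.Yf z) j = col (Y z) j" using RY.Yf_col U1(3) by blast
    show "\<And>j. j < r \<Longrightarrow> transpose_mat (T z0) *\<^sub>v col (transpose_mat (V z0)) j = 0\<^sub>v n" by (rule RV.Yroot)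
    show "\<And>c. c \<in> carrier_vec r \<Longrightarrow> transpose_mat (V z0) *\<^sub>v c = 0\<^sub>v n \<Longrightarrow> c = 0\<^sub>v r" by (rule RV.Yind)
  qed (use U1 d1 hol_mat_subset[OF S.T U1(3)] hol_mat_subset[OF RY.Y U1(3)] hol_mat_subset[OF hG U1(3)]
      hol_mat_subset[OF hK U1(3)] hol_mat_subset[OF RY.hol_Yf U1(3)] hol_mat_subset[OF RY.hol_Bf[OF hG TYG] U1(3)]
      hol_mat_subset[OF hV U1(3)] RY.Yroot RY.Yind S.sorted S.rn S.zero in auto)
  with U1(3) UO show thesis using that unfolding r_def by blast
qed

theorem mainTheorem1:
  fixes \<Omega> :: "complex set" and z0 :: complex and n :: nat
    and T V Y :: "complex \<Rightarrow> complex mat" and ms :: "nat list"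
  assumes "open \<Omega>" and "connected \<Omega>" and "z0 \<in> \<Omega>"
    and "hol_mat \<Omega> n n T"
    and "\<not> (\<forall>z\<in>\<Omega>. det (T z) = 0)"
    and "det (T z0) = 0"
    and "partial_mults \<Omega> n T z0 ms"
    and "left_canonical \<Omega> n T z0 ms V"
    and "right_canonical \<Omega> n T z0 ms Y"
  shows
    "let r = kernel_dim (T z0);
         \<Delta> = chi_diag r ms z0;
         W = (\<lambda>z. V z * T z * Y z);
         Yh = (\<lambda>z. Y z * minv (W z) * \<Delta> z);
         Vh = (\<lambda>z. \<Delta> z * minv (W z) * V z)
     in
      \<not> (\<forall>z\<in>\<Omega>. det (W z) = 0) \<and>
      (\<exists>U Y'. open U \<and> z0 \<in> U \<and> U \<subseteq> \<Omega> \<and> (\<forall>z\<in>U - {z0}. Y' z = Yh z) \<and>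
              right_canonical U n T z0 ms Y') \<and>
      pp_eq r r z0 (\<lambda>z. minv (\<Delta> z) * V z * T z * Yh z * minv (\<Delta> z)) (\<lambda>z. minv (\<Delta> z)) \<and>
      (\<exists>U V'. open U \<and> z0 \<in> U \<and> U \<subseteq> \<Omega> \<and> (\<forall>z\<in>U - {z0}. V' z = Vh z) \<and>
              left_canonical U n T z0 ms V') \<and>
      pp_eq r r z0 (\<lambda>z. minv (\<Delta> z) * Vh z * T z * Y z * minv (\<Delta> z)) (\<lambda>z. minv (\<Delta> z)) \<and>
      pp_eq n n z0 (\<lambda>z. minv (T z)) (\<lambda>z. Y z * minv (W z) * V z)"
proof -
  define r where "r = kernel_dim (T z0)"
  obtain U G K Yf B where UO: "U \<subseteq> \<Omega>" and C: "completed_canonical_pair U n r T Y V G K ms z0 Yf B"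
    using completed_canonical_pair_exists[OF assms(1,3,4,7,8,9)] unfolding r_def by blast
  interpret C: completed_canonical_pair U n r T Y V G K ms z0 Yf B by (rule C)
  have "U \<noteq> {z0}" using C.U(1) not_open_singleton by metis
  then obtain z1 where z1: "z1 \<in> U" "z1 \<noteq> z0" using C.U(2) by blast
  obtain V' where V': "\<And>z. z \<in> U \<Longrightarrow> V' z = minv (C.P z) * V z" "left_canonical U n T z0 ms V'"
    using C.left_canonical_Vhat[OF r_def] by blast
  have "\<not> (\<forall>z\<in>\<Omega>. det (C.W z) = 0)" using C.det_W_nonzero[OF z1] z1(1) UO by blast
  moreover have "right_canonical U n T z0 ms C.Yhat"
    using C.right_canonical_Yhat unfolding right_canonical_eq_dim r_def .
  moreover have "\<forall>z\<in>U - {z0}. V' z = C.\<Delta> z * minv (C.W z) * V z" using V'(1) C.Vh_eq by auto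
  ultimately show ?thesis
    unfolding Let_def r_def[symmetric]
    using C.U UO C.Yhat_eq V'(2) C.biorthogonal_right C.biorthogonal_left C.principal_part_minv_T
    by (intro conjI exI[of _ U] exI[of _ C.Yhat] exI[of _ V']) auto
qed

end
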